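(* With $B_k$ the Bernoulli numbers ($\frac{X}{e^X-1}=\sum_{k\ge0}\frac{B_k}{k!}X^k$) and $T$ the generating series of bi-brackets defined in the context, the product of two length-one generating series can be written in the following two ways: (i) \[ T\binom{X_1}{Y_1}T\binom{X_2}{Y_2}=T\binom{X_1,X_2}{Y_1,Y_2}+T\binom{X_2,X_1}{Y_2,Y_1}+\frac{1}{X_1-X_2}\Big(T\binom{X_1}{Y_1+Y_2}-T\binom{X_2}{Y_1+Y_2}\Big)+\sum_{k=1}^{\infty}\frac{B_k}{k!}(X_1-X_2)^{k-1}\Big(T\binom{X_1}{Y_1+Y_2}+(-1)^{k-1}T\binom{X_2}{Y_1+Y_2}\Big); \] (ii) \[ T\binom{X_1}{Y_1}T\binom{X_2}{Y_2}=T\binom{X_1+X_2,\,X_1}{Y_2,\,Y_1-Y_2}+T\binom{X_1+X_2,\,X_2}{Y_1,\,Y_2-Y_1}+\frac{1}{Y_1-Y_2}\Big(T\binom{X_1+X_2}{Y_1}-T\binom{X_1+X_2}{Y_2}\Big)+\sum_{k=1}^{\infty}\frac{B_k}{k!}(Y_1-Y_2)^{k-1}\Big(T\binom{X_1+X_2}{Y_1}+(-1)^{k-1}T\binom{X_1+X_2}{Y_2}\Big). \]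
   Context: For integers $s_1,\dots,s_l\ge1$ and $r_1,\dots,r_l\ge0$ the bi-bracket is \[ \left[\begin{matrix}s_1,\dots,s_l\\ r_1,\dots,r_l\end{matrix}\right]:=\sum_{\substack{u_1>\dots>u_l>0\\ v_1,\dots,v_l>0}}\prod_{j=1}^{l}\frac{u_j^{r_j}}{r_j!}\,\frac{v_j^{s_j-1}}{(s_j-1)!}\;q^{u_1v_1+\dots+u_lv_l}\in\mathbb{Q}[[q]], \] and its generating series is \[ T\binom{X_1,\dots,X_l}{Y_1,\dots,Y_l}:=\sum_{\substack{s_1,\dots,s_l>0\\ r_1,\dots,r_l>0}}\left[\begin{matrix}s_1,\dots,s_l\\ r_1-1,\dots,r_l-1\end{matrix}\right]X_1^{s_1-1}\cdots X_l^{s_l-1}Y_1^{r_1-1}\cdots Y_l^{r_l-1}. \] Identities are of formal power series in $q$ and the variables (the quotients by $X_1-X_2$, resp. $Y_1-Y_2$, are power series). *)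

theory Defs
  imports Complex_Main "HOL-Library.Function_Algebras"
    "HOL-Computational_Algebra.Formal_Power_Series"
begin

definition bernoulli :: "nat \<Rightarrow> rat" where
  "bernoulli k = fact k * fps_nth (fps_X / (fps_exp 1 - 1)) k"

text \<open>bibracket s r N = coefficient of q^N in the bi-bracket with upper row s
  and lower row r (lists of equal length l): sum over u_1 > ... > u_l > 0 and
  v_1,...,v_l > 0 with u_1 v_1 + ... + u_l v_l = N.\<close>
definition bibracket :: "nat list \<Rightarrow> nat list \<Rightarrow> nat \<Rightarrow> rat" where
  "bibracket s r N =
     (\<Sum>(u, v) \<in> {(u, v). length u = length s \<and> length v = length s \<and>
                     sorted_wrt (>) u \<and> (\<forall>x\<in>set u. 0 < x) \<and> (\<forall>x\<in>set v. 0 < x) \<and>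
                     (\<Sum>j<length s. u ! j * v ! j) = N}.
        \<Prod>j<length s. (of_nat (u ! j) ^ (r ! j) / fact (r ! j)) *
                        (of_nat (v ! j) ^ (s ! j - 1) / fact (s ! j - 1)))"

text \<open>A series is its coefficient function: the value at (n,a,b,c,d) is the
  coefficient of q^n X1^a X2^b Y1^c Y2^d. Addition, subtraction, zero are
  pointwise (HOL-Library.Function_Algebras).\<close>
type_synonym mono = "nat \<times> nat \<times> nat \<times> nat \<times> nat"
type_synonym ser = "mono \<Rightarrow> rat"

definition smult :: "ser \<Rightarrow> ser \<Rightarrow> ser" where
  "smult f g = (\<lambda>(n, a, b, c, d).
     \<Sum>(n', a', b', c', d') \<in> {..n} \<times> {..a} \<times> {..b} \<times> {..c} \<times> {..d}.
        f (n', a', b', c', d') * g (n - n', a - a', b - b', c - c', d - d'))"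

definition sone :: ser where
  "sone = (\<lambda>m. if m = (0, 0, 0, 0, 0) then 1 else 0)"

definition spow :: "ser \<Rightarrow> nat \<Rightarrow> ser" where
  "spow f k = (smult f ^^ k) sone"

definition sprodl :: "ser list \<Rightarrow> ser" where
  "sprodl fs = foldr smult fs sone"

definition sscale :: "rat \<Rightarrow> ser \<Rightarrow> ser" where
  "sscale c f = (\<lambda>m. c * f m)"

definition sX1 :: ser where "sX1 = (\<lambda>m. if m = (0, 1, 0, 0, 0) then 1 else 0)"
definition sX2 :: ser where "sX2 = (\<lambda>m. if m = (0, 0, 1, 0, 0) then 1 else 0)"
definition sY1 :: ser where "sY1 = (\<lambda>m. if m = (0, 0, 0, 1, 0) then 1 else 0)"
definition sY2 :: ser where "sY2 = (\<lambda>m. if m = (0, 0, 0, 0, 1) then 1 else 0)"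

definition qser :: "(nat \<Rightarrow> rat) \<Rightarrow> ser" where
  "qser f = (\<lambda>(n, a, b, c, d). if a = 0 \<and> b = 0 \<and> c = 0 \<and> d = 0 then f n else 0)"

text \<open>Formal (coefficientwise) sum of a family of series; meaningful when every
  coefficient receives only finitely many nonzero contributions.\<close>
definition fsum :: "('i \<Rightarrow> ser) \<Rightarrow> ser" where
  "fsum F = (\<lambda>m. \<Sum>i \<in> {i. F i m \<noteq> 0}. F i m)"

text \<open>Quotient of series (the context guarantees it exists; it is unique for
  divisors like X1 - X2).\<close>
definition sdiv :: "ser \<Rightarrow> ser \<Rightarrow> ser" where
  "sdiv f g = (SOME h. smult g h = f)"

text \<open>T(Z_1..Z_l; W_1..W_l) = sum over s_j, r_j > 0 of
  [s_1..s_l; r_1-1..r_l-1] Z_1^(s_1-1)...Z_l^(s_l-1) W_1^(r_1-1)...W_l^(r_l-1),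
  indexed by the exponent lists es = (s_j - 1), fs = (r_j - 1).\<close>
definition Tgen :: "ser list \<Rightarrow> ser list \<Rightarrow> ser" where
  "Tgen Zs Ws = fsum (\<lambda>(es :: nat list, fs :: nat list).
     if length es = length Zs \<and> length fs = length Ws then
       smult (qser (bibracket (map Suc es) fs))
         (smult (sprodl (map2 spow Zs es)) (sprodl (map2 spow Ws fs)))
     else 0)"

end

theory Submission
  imports Defs
begin

text \<open>
  Expanding the exponentials, \<open>T(X;Y)\<close> is the Lambert-type sum over \<open>u, v > 0\<close> of
  \<open>q^(uv) e^(vX + uY)\<close>, and \<open>T(Z1,Z2;W1,W2)\<close> is the sum over \<open>u1 > u2 > 0\<close>, \<open>v1, v2 > 0\<close>
  of \<open>q^(u1 v1 + u2 v2) e^(v1 Z1 + v2 Z2 + u1 W1 + u2 W2)\<close>. The product of two depth-one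
  series is therefore a sum over pairs \<open>(u1,v1), (u2,v2)\<close>. Splitting it according to
  \<open>u1 > u2\<close>, \<open>u1 < u2\<close>, \<open>u1 = u2\<close> gives (i); splitting according to the order of \<open>v1, v2\<close>
  and substituting \<open>(u1 + u2, u1, v2, v1 - v2)\<close> (resp. its mirror image) gives (ii).
  On the diagonal the inner sum \<open>\<Sum>0<i<n. e^(iA) e^((n-i)B)\<close> is geometric: with \<open>D = A - B\<close>
  and \<open>D/(e^D - 1) = \<Sum>k. B_k D^k/k!\<close> it equals \<open>(e^(nA) - e^(nB))/D\<close> plus the Bernoulli
  terms. Ring identities between coefficient functions are obtained by transporting them
  to nested formal power series.
\<close>

unbundle fps_syntax

section \<open>Series as nested formal power series\<close>

type_synonym mfps = "rat fps fps fps fps fps"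

definition to_fps :: "ser \<Rightarrow> mfps" where
  "to_fps f = Abs_fps (\<lambda>n. Abs_fps (\<lambda>a. Abs_fps (\<lambda>b. Abs_fps (\<lambda>c. Abs_fps (\<lambda>d. f (n,a,b,c,d))))))"

lemma to_fps_nth: "to_fps f $ n $ a $ b $ c $ d = f (n,a,b,c,d)"
  by (simp add: to_fps_def)

lemma to_fps_inj: "to_fps f = to_fps g \<Longrightarrow> f = g"
proof (rule ext)
  fix m :: mono assume "to_fps f = to_fps g"
  obtain n a b c d where m: "m = (n,a,b,c,d)" by (cases m) auto
  have "to_fps f $ n $ a $ b $ c $ d = to_fps g $ n $ a $ b $ c $ d"
    using \<open>to_fps f = to_fps g\<close> by simp
  thus "f m = g m" by (simp add: to_fps_nth m)
qed

lemma smult_nested_sums: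
  "smult f g (n,a,b,c,d) = (\<Sum>n'\<le>n. \<Sum>a'\<le>a. \<Sum>b'\<le>b. \<Sum>c'\<le>c. \<Sum>d'\<le>d.
     f (n',a',b',c',d') * g (n-n',a-a',b-b',c-c',d-d'))"
  unfolding smult_def by (simp add: sum.cartesian_product split_def)

lemma to_fps_smult: "to_fps (smult f g) = to_fps f * to_fps g"
  by (intro fps_ext) (simp add: to_fps_nth fps_mult_nth fps_sum_nth smult_nested_sums atLeast0AtMost)

lemma to_fps_add: "to_fps (f + g) = to_fps f + to_fps g"
  by (intro fps_ext) (simp add: to_fps_nth)

lemma to_fps_diff: "to_fps (f - g) = to_fps f - to_fps g"
  by (intro fps_ext) (simp add: to_fps_nth)

lemma to_fps_uminus: "to_fps (- f) = - to_fps f"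
  by (intro fps_ext) (simp add: to_fps_nth)

lemma to_fps_zero: "to_fps 0 = 0"
  by (intro fps_ext) (simp add: to_fps_nth)

lemma to_fps_sone: "to_fps sone = 1"
  by (intro fps_ext) (simp add: to_fps_nth sone_def)

lemma to_fps_sum: "to_fps (\<Sum>i\<in>A. F i) = (\<Sum>i\<in>A. to_fps (F i))"
proof (induction A rule: infinite_finite_induct)
  case (insert x A) thus ?case by (metis sum.insert to_fps_add)
qed (metis sum.infinite sum.empty to_fps_zero)+

lemma to_fps_eq_0_iff: "to_fps f = 0 \<longleftrightarrow> f = 0"
  using to_fps_inj[of f 0] by (auto simp: to_fps_zero)

definition sconst :: "rat \<Rightarrow> ser" where
  "sconst c = (\<lambda>m. if m = (0,0,0,0,0) then c else 0)"

definition mconst :: "rat \<Rightarrow> mfps" where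
  "mconst c = to_fps (sconst c)"

lemma sscale_eq_smult_sconst: "sscale c f = smult (sconst c) f"
proof
  fix m :: mono
  obtain n a b c' d where m: "m = (n,a,b,c',d)" by (cases m) auto
  have "smult (sconst c) f m = (\<Sum>p\<in>{..n} \<times> {..a} \<times> {..b} \<times> {..c'} \<times> {..d}.
      (if p = (0,0,0,0,0) then c * f (n,a,b,c',d) else 0))"
    unfolding m smult_def prod.case by (intro sum.cong) (auto simp: sconst_def split: if_splits)
  also have "\<dots> = c * f (n,a,b,c',d)" by (simp add: sum.delta)
  finally show "sscale c f m = smult (sconst c) f m" by (simp add: m sscale_def)
qed

lemma to_fps_sscale: "to_fps (sscale c f) = mconst c * to_fps f"
  by (simp add: sscale_eq_smult_sconst to_fps_smult mconst_def)

lemma to_fps_spow: "to_fps (spow f k) = to_fps f ^ k"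
  by (induction k) (simp_all add: spow_def to_fps_sone to_fps_smult)


lemma mconst_mult: "mconst (a * b) = mconst a * mconst b"
proof -
  have "sconst (a * b) = sscale a (sconst b)" by (auto simp: sconst_def sscale_def)
  thus ?thesis unfolding mconst_def by (simp add: to_fps_sscale mconst_def)
qed

lemma mconst_1: "mconst 1 = 1"
proof -
  have "sconst 1 = sone" by (auto simp: sconst_def sone_def)
  thus ?thesis by (simp add: mconst_def to_fps_sone)
qed

lemma mconst_0: "mconst 0 = 0"
proof -
  have "sconst 0 = 0" by (auto simp: sconst_def)
  thus ?thesis by (simp add: mconst_def to_fps_zero)
qed

lemma mconst_add: "mconst (a + b) = mconst a + mconst b"
  unfolding mconst_def to_fps_add[symmetric] by (rule arg_cong[where f=to_fps]) (auto simp: sconst_def)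

lemma mconst_power: "mconst (c ^ k) = mconst c ^ k"
  by (induction k) (simp_all add: mconst_1 mconst_mult)

lemma mconst_of_nat: "mconst (of_nat k) = of_nat k"
  by (induction k) (simp_all add: mconst_0 mconst_add mconst_1)

lemmas to_fps_simps = to_fps_add to_fps_diff to_fps_uminus to_fps_zero to_fps_sone to_fps_sum
  to_fps_sscale to_fps_spow to_fps_smult

lemma smult_comm: "smult f g = smult g f"
  by (rule to_fps_inj) (simp add: to_fps_simps mult.commute)

lemma smult_assoc: "smult (smult f g) h = smult f (smult g h)"
  by (rule to_fps_inj) (simp add: to_fps_simps mult.assoc)

lemma smult_left_commute: "smult f (smult g h) = smult g (smult f h)"
  by (rule to_fps_inj) (simp add: to_fps_simps mult.left_commute)

lemmas smult_ac = smult_comm smult_assoc smult_left_commute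

lemma smult_sone [simp]: "smult sone f = f" "smult f sone = f"
  by (rule to_fps_inj, simp add: to_fps_simps)+

lemma smult_zero [simp]: "smult 0 f = 0" "smult f 0 = 0"
  by (rule to_fps_inj, simp add: to_fps_simps)+

lemma smult_add: "smult (f + g) h = smult f h + smult g h" "smult h (f + g) = smult h f + smult h g"
  by (rule to_fps_inj, simp add: to_fps_simps algebra_simps)+

lemma smult_diff: "smult (f - g) h = smult f h - smult g h" "smult h (f - g) = smult h f - smult h g"
  by (rule to_fps_inj, simp add: to_fps_simps algebra_simps)+

lemma smult_sscale:
  "smult (sscale c f) g = sscale c (smult f g)" "smult g (sscale c f) = sscale c (smult g f)"
  by (rule to_fps_inj, simp add: to_fps_simps algebra_simps)+

lemma smult_sum: "smult X (\<Sum>i\<in>A. F i) = (\<Sum>i\<in>A. smult X (F i))"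
  by (rule to_fps_inj) (simp add: to_fps_simps sum_distrib_left)

lemma sdiv_unique:
  assumes "smult D h = f" "D \<noteq> 0"
  shows "sdiv f D = h"
proof -
  have "smult D (sdiv f D) = f"
    unfolding sdiv_def using someI[of "\<lambda>h. smult D h = f" h] assms(1) by blast
  hence "to_fps D * to_fps (sdiv f D) = to_fps D * to_fps h"
    using assms(1) by (metis to_fps_smult)
  moreover have "to_fps D \<noteq> 0" using assms(2) to_fps_eq_0_iff by blast
  ultimately show ?thesis using to_fps_inj by simp
qed

lemma sscale_1 [simp]: "sscale 1 f = f"
  by (auto simp: sscale_def)

lemma sscale_0 [simp]: "sscale 0 f = 0" "sscale c 0 = 0"
  by (auto simp: sscale_def)

lemma sscale_sscale: "sscale c (sscale d f) = sscale (c * d) f"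
  by (auto simp: sscale_def)

lemma sscale_add: "sscale c (f + g) = sscale c f + sscale c g"
  by (auto simp: sscale_def algebra_simps)

lemma sscale_add_left: "sscale (c + d) f = sscale c f + sscale d f"
  by (auto simp: sscale_def algebra_simps)

lemma sscale_sum_left: "(\<Sum>i\<in>A. sscale (c i) X) = sscale (\<Sum>i\<in>A. c i) X"
  by (induction A rule: infinite_finite_induct) (simp_all add: sscale_add_left)

lemma uminus_eq_sscale: "- D = sscale (-1) D"
  by (auto simp: sscale_def)

lemma spow_0 [simp]: "spow f 0 = sone"
  by (simp add: spow_def)

lemma spow_Suc: "spow f (Suc k) = smult f (spow f k)"
  by (simp add: spow_def)

lemma spow_add: "spow f (i + j) = smult (spow f i) (spow f j)"
  by (rule to_fps_inj) (simp add: to_fps_simps power_add)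

lemma spow_sscale: "spow (sscale c f) k = sscale (c ^ k) (spow f k)"
  by (rule to_fps_inj) (simp add: to_fps_simps power_mult_distrib mconst_power)

lemma sprodl_simps [simp]: "sprodl [] = sone" "sprodl (x # xs) = smult x (sprodl xs)"
  by (simp_all add: sprodl_def)

section \<open>Formal sums of families of series\<close>

definition mono_le :: "mono \<Rightarrow> mono \<Rightarrow> bool" where
  "mono_le x y \<longleftrightarrow> (case x of (n',a',b',c',d') \<Rightarrow> case y of (n,a,b,c,d) \<Rightarrow>
      n' \<le> n \<and> a' \<le> a \<and> b' \<le> b \<and> c' \<le> c \<and> d' \<le> d)"

definition mono_diff :: "mono \<Rightarrow> mono \<Rightarrow> mono" where
  "mono_diff y x = (case x of (n',a',b',c',d') \<Rightarrow> case y of (n,a,b,c,d) \<Rightarrow>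
      (n-n', a-a', b-b', c-c', d-d'))"

definition mono_deg :: "mono \<Rightarrow> nat" where
  "mono_deg x = (case x of (n,a,b,c,d) \<Rightarrow> n+a+b+c+d)"

lemma mono_le_simp [simp]:
  "mono_le (n',a',b',c',d') (n,a,b,c,d) \<longleftrightarrow> n' \<le> n \<and> a' \<le> a \<and> b' \<le> b \<and> c' \<le> c \<and> d' \<le> d"
  by (simp add: mono_le_def)

lemma mono_diff_simp [simp]:
  "mono_diff (n,a,b,c,d) (n',a',b',c',d') = (n-n', a-a', b-b', c-c', d-d')"
  by (simp add: mono_diff_def)

lemma mono_deg_simp [simp]: "mono_deg (n,a,b,c,d) = n+a+b+c+d"
  by (simp add: mono_deg_def)

lemma mono_le_box: "{p. mono_le p (n,a,b,c,d)} = {..n} \<times> {..a} \<times> {..b} \<times> {..c} \<times> {..d}"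
  by auto

lemma mono_le_refl: "mono_le m m"
  by (cases m) auto

lemma mono_le_trans: "mono_le p q \<Longrightarrow> mono_le q m \<Longrightarrow> mono_le p m"
  by (cases m, cases p, cases q) auto

lemma mono_le_diff: "mono_le p m \<Longrightarrow> mono_le (mono_diff m p) m"
  by (cases m, cases p) auto

lemma mono_le_deg: "mono_le p m \<Longrightarrow> mono_deg p \<le> mono_deg m"
  by (cases m, cases p) auto

lemma smult_mono_le: "smult f g m = (\<Sum>p\<in>{p. mono_le p m}. f p * g (mono_diff m p))"
proof -
  obtain n a b c d where m: "m = (n,a,b,c,d)" by (cases m) auto
  show ?thesis unfolding m smult_def mono_le_box prod.case
    by (intro sum.cong) auto
qed

lemma smult_nonzeroD:
  assumes "smult f g m \<noteq> 0"
  shows "\<exists>p. mono_le p m \<and> f p \<noteq> 0 \<and> g (mono_diff m p) \<noteq> 0"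
proof (rule ccontr)
  assume "\<not> ?thesis"
  hence "\<forall>p\<in>{p. mono_le p m}. f p * g (mono_diff m p) = 0" by auto
  hence "smult f g m = 0" unfolding smult_mono_le by (rule sum.neutral)
  with assms show False by simp
qed

text \<open>\<open>fsum\<close> is well behaved for families with finitely many nonzero terms at each
  coefficient; compatibility with products needs finiteness below each monomial.\<close>

definition pointwise_finite :: "('i \<Rightarrow> ser) \<Rightarrow> bool" where
  "pointwise_finite F \<longleftrightarrow> (\<forall>m. finite {i. F i m \<noteq> 0})"

definition locally_finite :: "('i \<Rightarrow> ser) \<Rightarrow> bool" where
  "locally_finite F \<longleftrightarrow> (\<forall>m. finite {i. \<exists>p. mono_le p m \<and> F i p \<noteq> 0})"

lemma pointwise_finiteD: "pointwise_finite F \<Longrightarrow> finite {i. F i m \<noteq> 0}"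
  unfolding pointwise_finite_def by blast

lemma locally_finiteD: "locally_finite F \<Longrightarrow> finite {i. \<exists>p. mono_le p m \<and> F i p \<noteq> 0}"
  unfolding locally_finite_def by blast

lemma pointwise_finiteI: "(\<And>m. finite {i. F i m \<noteq> 0}) \<Longrightarrow> pointwise_finite F"
  unfolding pointwise_finite_def by blast

lemma locally_finiteI: "(\<And>m. finite {i. \<exists>p. mono_le p m \<and> F i p \<noteq> 0}) \<Longrightarrow> locally_finite F"
  unfolding locally_finite_def by blast

lemma locally_finite_imp_pointwise_finite: "locally_finite F \<Longrightarrow> pointwise_finite F"
  by (rule pointwise_finiteI, rule finite_subset[OF _ locally_finiteD[of F]])
     (use mono_le_refl in blast)+

lemma pointwise_finite_subfamily:
  assumes "pointwise_finite G" "\<And>i m. F i m \<noteq> 0 \<Longrightarrow> G i m \<noteq> 0"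
  shows "pointwise_finite F"
  by (rule pointwise_finiteI, rule finite_subset[OF _ pointwise_finiteD[OF assms(1)]])
     (use assms(2) in blast)

lemma locally_finite_subfamily:
  assumes "locally_finite G" "\<And>i m. F i m \<noteq> 0 \<Longrightarrow> G i m \<noteq> 0"
  shows "locally_finite F"
  by (rule locally_finiteI, rule finite_subset[OF _ locally_finiteD[OF assms(1)]])
     (use assms(2) in blast)

lemma pointwise_finite_add:
  "pointwise_finite F \<Longrightarrow> pointwise_finite G \<Longrightarrow> pointwise_finite (\<lambda>i. F i + G i)"
  unfolding pointwise_finite_def
proof
  fix m assume a: "\<forall>m. finite {i. F i m \<noteq> 0}" "\<forall>m. finite {i. G i m \<noteq> 0}"
  show "finite {i. (F i + G i) m \<noteq> 0}"
    by (rule finite_subset[of _ "{i. F i m \<noteq> 0} \<union> {i. G i m \<noteq> 0}"])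
       (use a in \<open>auto simp del: split_paired_All\<close>)
qed

lemma fsum_eq_sum_superset:
  "finite S \<Longrightarrow> (\<And>i. i \<notin> S \<Longrightarrow> F i m = 0) \<Longrightarrow> fsum F m = (\<Sum>i\<in>S. F i m)"
  unfolding fsum_def by (rule sum.mono_neutral_left) auto

lemma sum_apply: "(\<Sum>i\<in>A. F i) m = (\<Sum>i\<in>A. F i m)"
  by (induction A rule: infinite_finite_induct) auto

lemma fsum_finite:
  assumes "finite A" "\<And>i. i \<notin> A \<Longrightarrow> F i = 0"
  shows "fsum F = (\<Sum>i\<in>A. F i)"
  by (rule ext) (simp add: sum_apply fsum_eq_sum_superset[OF assms(1)] assms(2))

lemma fsum_zero [simp]: "fsum (\<lambda>i. 0) = 0"
  by (auto simp: fsum_def)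

lemma fsum_cong: "(\<And>i. F i = G i) \<Longrightarrow> fsum F = fsum G"
  by metis

lemma fsum_pointwise:
  fixes op :: "rat \<Rightarrow> rat \<Rightarrow> rat"
  assumes "pointwise_finite F" "pointwise_finite G" "op 0 0 = 0"
    and "\<And>A m. finite A \<Longrightarrow> op (\<Sum>i\<in>A. F i m) (\<Sum>i\<in>A. G i m) = (\<Sum>i\<in>A. op (F i m) (G i m))"
  shows "fsum (\<lambda>i m. op (F i m) (G i m)) m = op (fsum F m) (fsum G m)"
proof -
  let ?S = "{i. F i m \<noteq> 0} \<union> {i. G i m \<noteq> 0}"
  have S: "finite ?S" using pointwise_finiteD[OF assms(1)] pointwise_finiteD[OF assms(2)] by blast
  have "fsum F m = (\<Sum>i\<in>?S. F i m)" "fsum G m = (\<Sum>i\<in>?S. G i m)"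
    by (rule fsum_eq_sum_superset[OF S], simp)+
  moreover have "fsum (\<lambda>i m. op (F i m) (G i m)) m = (\<Sum>i\<in>?S. op (F i m) (G i m))"
    by (rule fsum_eq_sum_superset[OF S]) (simp add: assms(3))
  ultimately show ?thesis by (simp add: assms(4)[OF S])
qed

lemma fsum_add:
  assumes "pointwise_finite F" "pointwise_finite G"
  shows "fsum (\<lambda>i. F i + G i) = fsum F + fsum G"
proof
  fix m show "fsum (\<lambda>i. F i + G i) m = (fsum F + fsum G) m"
    using fsum_pointwise[OF assms, of "(+)" m] by (simp add: sum.distrib plus_fun_def)
qed

lemma fsum_diff:
  assumes "pointwise_finite F" "pointwise_finite G"
  shows "fsum (\<lambda>i. F i - G i) = fsum F - fsum G"
proof
  fix m show "fsum (\<lambda>i. F i - G i) m = (fsum F - fsum G) m"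
    using fsum_pointwise[OF assms, of "(-)" m] by (simp add: sum_subtractf fun_diff_def)
qed

lemma fsum_smult:
  assumes "locally_finite F"
  shows "smult g (fsum F) = fsum (\<lambda>i. smult g (F i))"
proof
  fix m
  let ?S = "{i. \<exists>p. mono_le p m \<and> F i p \<noteq> 0}"
  have S: "finite ?S" using locally_finiteD[OF assms] by blast
  have "smult g (fsum F) m = (\<Sum>p\<in>{p. mono_le p m}. g p * (\<Sum>i\<in>?S. F i (mono_diff m p)))"
    unfolding smult_mono_le
    by (intro sum.cong refl arg_cong2[where f="(*)"] fsum_eq_sum_superset[OF S])
       (use mono_le_diff in blast)
  also have "\<dots> = (\<Sum>i\<in>?S. smult g (F i) m)"
    by (simp add: smult_mono_le sum_distrib_left sum.swap[where A="{p. mono_le p m}"])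
  also have "\<dots> = fsum (\<lambda>i. smult g (F i)) m"
    by (rule fsum_eq_sum_superset[symmetric, OF S]) (use smult_nonzeroD mono_le_diff in blast)
  finally show "smult g (fsum F) m = fsum (\<lambda>i. smult g (F i)) m" .
qed

lemma fsum_smult_right:
  "locally_finite F \<Longrightarrow> smult (fsum F) g = fsum (\<lambda>i. smult (F i) g)"
  using fsum_smult[of F g] by (simp add: smult_comm)


lemma fsum_fsum:
  assumes "pointwise_finite (\<lambda>(i,j). F i j)"
  shows "fsum (\<lambda>i. fsum (F i)) = fsum (\<lambda>(i,j). F i j)"
proof
  fix m
  let ?U = "{ij. (case ij of (i,j) \<Rightarrow> F i j) m \<noteq> 0}"
  have "finite ?U" using pointwise_finiteD[OF assms] by blast
  hence S1: "finite (fst ` ?U)" and S2: "finite (snd ` ?U)" by auto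
  have U: "F i j m \<noteq> 0 \<Longrightarrow> i \<in> fst ` ?U \<and> j \<in> snd ` ?U" for i j
    by (metis (mono_tags, lifting) case_prod_conv fst_conv image_eqI mem_Collect_eq snd_conv)
  have inner: "fsum (F i) m = (\<Sum>j\<in>snd ` ?U. F i j m)" for i
    by (rule fsum_eq_sum_superset[OF S2]) (use U in blast)
  have "fsum (\<lambda>i. fsum (F i)) m = (\<Sum>i\<in>fst ` ?U. fsum (F i) m)"
    by (rule fsum_eq_sum_superset[OF S1]) (use U in \<open>auto simp: inner intro!: sum.neutral\<close>)
  also have "\<dots> = (\<Sum>ij\<in>fst ` ?U \<times> snd ` ?U. (case ij of (i,j) \<Rightarrow> F i j) m)"
    by (simp add: inner sum.cartesian_product split_def)
  also have "\<dots> = fsum (\<lambda>(i,j). F i j) m"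
    by (rule fsum_eq_sum_superset[symmetric]) (use S1 S2 U in auto)
  finally show "fsum (\<lambda>i. fsum (F i)) m = fsum (\<lambda>(i,j). F i j) m" .
qed

lemma fsum_reindex:
  assumes "\<And>i. i \<notin> A \<Longrightarrow> F i = 0" "\<And>j. j \<notin> B \<Longrightarrow> G j = 0"
    and "\<And>i. i \<in> A \<Longrightarrow> h i \<in> B \<and> k (h i) = i" "\<And>j. j \<in> B \<Longrightarrow> k j \<in> A \<and> h (k j) = j"
    and "\<And>i. i \<in> A \<Longrightarrow> G (h i) = F i"
  shows "fsum F = fsum G"
proof
  fix m
  show "fsum F m = fsum G m" unfolding fsum_def
  proof (rule sum.reindex_bij_witness[where i=k and j=h])
    fix i assume i: "i \<in> {i. F i m \<noteq> 0}"
    hence "i \<in> A" using assms(1) by fastforce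
    thus "k (h i) = i" "h i \<in> {j. G j m \<noteq> 0}" "G (h i) m = F i m"
      using assms(3,5) i by auto
  next
    fix j assume j: "j \<in> {j. G j m \<noteq> 0}"
    hence "j \<in> B" using assms(2) by fastforce
    thus "h (k j) = j" "k j \<in> {i. F i m \<noteq> 0}"
      using assms(4,5) j by (auto, metis)
  qed
qed

lemma fsum_regroup_diagonals:
  fixes H :: "nat \<Rightarrow> nat \<Rightarrow> ser"
  assumes "pointwise_finite (\<lambda>(i,j). H i j)"
  shows "fsum (\<lambda>(i,j). H i j) = fsum (\<lambda>k. \<Sum>i\<le>k. H i (k - i))"
proof -
  let ?K = "\<lambda>(k::nat,i::nat). if i \<le> k then H i (k - i) else 0"
  have "fsum (\<lambda>(i,j). H i j) = fsum ?K"
    by (rule fsum_reindex[where A=UNIV and B="{(k,i). i \<le> k}" and h="\<lambda>(i,j). (i+j, i)"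
          and k="\<lambda>(k,i). (i, k - i)"]) auto
  also have "\<dots> = fsum (\<lambda>k. fsum (\<lambda>i. if i \<le> k then H i (k - i) else 0))"
  proof (rule fsum_fsum[symmetric], rule pointwise_finiteI)
    fix m
    have "{ki. ?K ki m \<noteq> 0} \<subseteq> (\<lambda>(i,j). (i+j, i)) ` {ij. (case ij of (i,j) \<Rightarrow> H i j) m \<noteq> 0}"
      by (auto split: if_splits intro!: image_eqI[where x="(i, k-i)" for i k])
    thus "finite {ki. ?K ki m \<noteq> 0}"
      using pointwise_finiteD[OF assms] finite_subset by blast
  qed
  also have "\<dots> = fsum (\<lambda>k. \<Sum>i\<le>k. H i (k - i))"
    by (rule fsum_cong, subst fsum_finite[where A="{..k}" for k]) auto
  finally show ?thesis .
qed

lemma fsum_split3: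
  assumes "pointwise_finite F"
    and "\<And>i. (Q1 i \<and> \<not> Q2 i \<and> \<not> Q3 i) \<or> (\<not> Q1 i \<and> Q2 i \<and> \<not> Q3 i) \<or> (\<not> Q1 i \<and> \<not> Q2 i \<and> Q3 i)"
  shows "fsum F = fsum (\<lambda>i. if Q1 i then F i else 0) + fsum (\<lambda>i. if Q2 i then F i else 0)
     + fsum (\<lambda>i. if Q3 i then F i else 0)"
proof -
  have restrict: "pointwise_finite (\<lambda>i. if P i then F i else 0)" for P
    by (rule pointwise_finite_subfamily[OF assms(1)]) (auto split: if_splits)
  have "fsum F = fsum (\<lambda>i. ((if Q1 i then F i else 0) + (if Q2 i then F i else 0))
                         + (if Q3 i then F i else 0))"
    by (rule fsum_cong) (use assms(2) in auto)
  also have "\<dots> = fsum (\<lambda>i. if Q1 i then F i else 0) + fsum (\<lambda>i. if Q2 i then F i else 0)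
                 + fsum (\<lambda>i. if Q3 i then F i else 0)"
    by (simp add: fsum_add pointwise_finite_add restrict)
  finally show ?thesis .
qed

section \<open>Order bounds\<close>

definition order_ge :: "ser \<Rightarrow> nat \<Rightarrow> nat \<Rightarrow> bool" where
  "order_ge f q d \<longleftrightarrow> (\<forall>n a b c e. f (n,a,b,c,e) \<noteq> 0 \<longrightarrow> q \<le> n \<and> d \<le> a+b+c+e)"

lemma order_geI:
  "(\<And>n a b c e. f (n,a,b,c,e) \<noteq> 0 \<Longrightarrow> q \<le> n \<and> d \<le> a+b+c+e) \<Longrightarrow> order_ge f q d"
  unfolding order_ge_def by blast

lemma order_geD: "order_ge f q d \<Longrightarrow> f (n,a,b,c,e) \<noteq> 0 \<Longrightarrow> q \<le> n \<and> d \<le> a+b+c+e"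
  unfolding order_ge_def by blast

lemma order_ge_0_0: "order_ge f 0 0"
  by (simp add: order_ge_def)

lemma order_ge_zero [simp]: "order_ge 0 q d"
  by (rule order_geI) simp

lemma order_ge_support:
  assumes "order_ge f q d" "order_ge g q d" "\<And>m. h m \<noteq> 0 \<Longrightarrow> f m \<noteq> 0 \<or> g m \<noteq> 0"
  shows "order_ge h q d"
  using assms unfolding order_ge_def by blast

lemma order_ge_add: "order_ge f q d \<Longrightarrow> order_ge g q d \<Longrightarrow> order_ge (f + g) q d"
  by (erule order_ge_support) auto

lemma order_ge_diff: "order_ge f q d \<Longrightarrow> order_ge g q d \<Longrightarrow> order_ge (f - g) q d"
  by (erule order_ge_support) auto

lemma order_ge_uminus: "order_ge f q d \<Longrightarrow> order_ge (- f) q d"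
  by (rule order_ge_support[of f q d f]) auto

lemma order_ge_sscale: "order_ge f q d \<Longrightarrow> order_ge (sscale c f) q d"
  by (rule order_ge_support[of f q d f]) (auto simp: sscale_def)

lemma order_ge_sone: "order_ge sone 0 0"
  by (rule order_geI) (simp add: sone_def)

lemma order_ge_smult:
  assumes "order_ge f q1 d1" "order_ge g q2 d2"
  shows "order_ge (smult f g) (q1 + q2) (d1 + d2)"
proof (rule order_geI)
  fix n a b c e assume "smult f g (n,a,b,c,e) \<noteq> 0"
  then obtain p where p: "mono_le p (n,a,b,c,e)" "f p \<noteq> 0" "g (mono_diff (n,a,b,c,e) p) \<noteq> 0"
    using smult_nonzeroD by blast
  obtain n' a' b' c' e' where pp: "p = (n',a',b',c',e')" by (cases p) auto
  have "q1 \<le> n' \<and> d1 \<le> a'+b'+c'+e'" using order_geD[OF assms(1)] p(2) pp by blast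
  moreover have "q2 \<le> n-n' \<and> d2 \<le> (a-a')+(b-b')+(c-c')+(e-e')"
    using order_geD[OF assms(2)] p(3) pp by simp
  ultimately show "q1 + q2 \<le> n \<and> d1 + d2 \<le> a + b + c + e"
    using p(1) pp by simp linarith
qed

lemma order_ge_spow: "order_ge f q d \<Longrightarrow> order_ge (spow f k) (k * q) (k * d)"
  by (induction k) (simp_all add: order_ge_sone spow_Suc order_ge_smult)

lemma locally_finite_by_order:
  assumes "\<And>i. i \<notin> I \<Longrightarrow> F i = 0" "\<And>i. i \<in> I \<Longrightarrow> order_ge (F i) (q i) (d i)"
    and "\<And>N. finite {i\<in>I. q i + d i \<le> N}"
  shows "locally_finite F"
proof (rule locally_finiteI)
  fix m
  show "finite {i. \<exists>p. mono_le p m \<and> F i p \<noteq> 0}"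
  proof (rule finite_subset[OF _ assms(3)[of "mono_deg m"]], safe)
    fix i p assume p: "mono_le p m" "F i p \<noteq> 0"
    show "i \<in> I" using p assms(1) by fastforce
    obtain n a b c e where pp: "p = (n,a,b,c,e)" by (cases p) auto
    have "q i \<le> n \<and> d i \<le> a+b+c+e" using assms(2)[OF \<open>i \<in> I\<close>] p(2) unfolding order_ge_def pp by blast
    thus "q i + d i \<le> mono_deg m" using mono_le_deg[OF p(1)] pp by simp
  qed
qed

lemma locally_finite_product:
  assumes "locally_finite F" "locally_finite G"
  shows "locally_finite (\<lambda>(i,j). smult (F i) (G j))"
proof (rule locally_finiteI)
  fix m
  let ?SF = "{i. \<exists>p. mono_le p m \<and> F i p \<noteq> 0}" and ?SG = "{j. \<exists>p. mono_le p m \<and> G j p \<noteq> 0}"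
  have "{ij. \<exists>p. mono_le p m \<and> (case ij of (i,j) \<Rightarrow> smult (F i) (G j)) p \<noteq> 0} \<subseteq> ?SF \<times> ?SG"
  proof (rule subsetI)
    fix ij assume "ij \<in> {ij. \<exists>p. mono_le p m \<and> (case ij of (i,j) \<Rightarrow> smult (F i) (G j)) p \<noteq> 0}"
    then obtain i j p where ij: "ij = (i,j)" "mono_le p m" "smult (F i) (G j) p \<noteq> 0"
      by (cases ij) auto
    then obtain p' where "mono_le p' p" "F i p' \<noteq> 0" "G j (mono_diff p p') \<noteq> 0"
      using smult_nonzeroD by blast
    thus "ij \<in> ?SF \<times> ?SG" using ij mono_le_trans mono_le_diff by blast
  qed
  moreover have "finite (?SF \<times> ?SG)" using locally_finiteD[OF assms(1)] locally_finiteD[OF assms(2)] by blast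
  ultimately show "finite {ij. \<exists>p. mono_le p m \<and> (case ij of (i,j) \<Rightarrow> smult (F i) (G j)) p \<noteq> 0}"
    by (rule finite_subset)
qed

lemma smult_fsum_fsum:
  assumes "locally_finite F" "locally_finite G"
  shows "smult (fsum F) (fsum G) = fsum (\<lambda>(i,j). smult (F i) (G j))"
proof -
  have "smult (fsum F) (fsum G) = fsum (\<lambda>i. fsum (\<lambda>j. smult (F i) (G j)))"
    unfolding fsum_smult_right[OF assms(1)] by (rule fsum_cong) (rule fsum_smult[OF assms(2)])
  also have "\<dots> = fsum (\<lambda>(i,j). smult (F i) (G j))"
    by (rule fsum_fsum) (intro locally_finite_imp_pointwise_finite locally_finite_product assms)
  finally show ?thesis .
qed

section \<open>Substitution into univariate power series\<close>

definition positive_degree :: "ser \<Rightarrow> bool" where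
  "positive_degree Z \<longleftrightarrow> order_ge Z 0 1"

lemma positive_degree_add: "positive_degree A \<Longrightarrow> positive_degree B \<Longrightarrow> positive_degree (A + B)"
  by (simp add: positive_degree_def order_ge_add)

lemma positive_degree_diff: "positive_degree A \<Longrightarrow> positive_degree B \<Longrightarrow> positive_degree (A - B)"
  by (simp add: positive_degree_def order_ge_diff)

lemma positive_degree_uminus: "positive_degree A \<Longrightarrow> positive_degree (- A)"
  by (simp add: positive_degree_def order_ge_uminus)

lemma positive_degree_sscale: "positive_degree A \<Longrightarrow> positive_degree (sscale c A)"
  by (simp add: positive_degree_def order_ge_sscale)

lemma positive_degree_spow: "positive_degree D \<Longrightarrow> order_ge (spow D k) 0 k"
  using order_ge_spow[of D 0 1 k] by (simp add: positive_degree_def)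

definition eval_fps :: "rat fps \<Rightarrow> ser \<Rightarrow> ser" where
  "eval_fps f D = fsum (\<lambda>k. sscale (f $ k) (spow D k))"

definition sexp :: "ser \<Rightarrow> ser" where
  "sexp Z = eval_fps (fps_exp 1) Z"

definition sexp_times :: "ser \<Rightarrow> nat \<Rightarrow> ser" where
  "sexp_times Z v = sexp (sscale (of_nat v) Z)"

lemma locally_finite_powers:
  "positive_degree D \<Longrightarrow> locally_finite (\<lambda>k. sscale (c k) (spow D k))"
  by (rule locally_finite_by_order[where I=UNIV and q="\<lambda>_. 0" and d="\<lambda>k. k"])
     (auto intro: order_ge_sscale positive_degree_spow)

lemma locally_finite_double_powers:
  assumes "positive_degree A" "positive_degree B"
  shows "locally_finite (\<lambda>(i,j). sscale (c i j) (smult (spow A i) (spow B j)))"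
proof (rule locally_finite_by_order[where I=UNIV and q="\<lambda>_. 0" and d="\<lambda>(i,j). i + j"])
  fix ij :: "nat \<times> nat"
  show "order_ge ((\<lambda>(i,j). sscale (c i j) (smult (spow A i) (spow B j))) ij) 0 ((\<lambda>(i,j). i + j) ij)"
    using order_ge_smult[OF positive_degree_spow[OF assms(1)] positive_degree_spow[OF assms(2)]]
    by (auto intro: order_ge_sscale split: prod.splits)
next
  show "finite {ij \<in> UNIV. 0 + (\<lambda>(i,j). i + j) ij \<le> N}" for N :: nat
    by (rule finite_subset[of _ "{..N} \<times> {..N}"]) auto
qed auto


lemma eval_fps_diff:
  assumes "positive_degree D"
  shows "eval_fps (f - g) D = eval_fps f D - eval_fps g D"
proof -
  have "eval_fps (f - g) D = fsum (\<lambda>k. sscale (f $ k) (spow D k) - sscale (g $ k) (spow D k))"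
    unfolding eval_fps_def by (rule fsum_cong) (auto simp: sscale_def algebra_simps)
  also have "\<dots> = eval_fps f D - eval_fps g D"
    unfolding eval_fps_def
    by (rule fsum_diff) (auto intro: locally_finite_imp_pointwise_finite locally_finite_powers assms)
  finally show ?thesis .
qed

lemma eval_fps_1: "eval_fps 1 D = sone"
  unfolding eval_fps_def by (subst fsum_finite[where A="{0}"]) auto

lemma eval_fps_X: "eval_fps fps_X D = D"
  unfolding eval_fps_def by (subst fsum_finite[where A="{1}"]) (auto simp: fps_X_def spow_Suc)

lemma eval_fps_mult:
  assumes "positive_degree D"
  shows "eval_fps (f * g) D = smult (eval_fps f D) (eval_fps g D)"
proof -
  let ?H = "\<lambda>i j. sscale (f $ i * g $ j) (smult (spow D i) (spow D j))"
  have "smult (eval_fps f D) (eval_fps g D)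
      = fsum (\<lambda>(i,j). smult (sscale (f $ i) (spow D i)) (sscale (g $ j) (spow D j)))"
    unfolding eval_fps_def by (rule smult_fsum_fsum) (auto intro: locally_finite_powers assms)
  also have "\<dots> = fsum (\<lambda>(i,j). ?H i j)"
    by (rule fsum_cong) (auto simp: smult_sscale sscale_sscale mult.commute)
  also have "\<dots> = fsum (\<lambda>k. \<Sum>i\<le>k. ?H i (k - i))"
    by (rule fsum_regroup_diagonals)
       (intro locally_finite_imp_pointwise_finite locally_finite_double_powers assms)
  also have "\<dots> = eval_fps (f * g) D"
    unfolding eval_fps_def
    by (rule fsum_cong) (simp add: sscale_sum_left fps_mult_nth atLeast0AtMost spow_add[symmetric])
  finally show ?thesis ..
qed

lemma sexp_zero: "sexp 0 = sone"
  unfolding sexp_def eval_fps_def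
proof (subst fsum_finite[where A="{0}"])
  fix i :: nat assume "i \<notin> {0}"
  then obtain k where "i = Suc k" by (cases i) auto
  thus "sscale (fps_exp 1 $ i) (spow 0 i) = 0" by (simp add: spow_Suc)
qed auto

lemma sscale_spow_add_binomial:
  "sscale (1 / fact k) (spow (A + B) k) =
     (\<Sum>i\<le>k. sscale (1 / fact i * (1 / fact (k - i))) (smult (spow A i) (spow B (k - i))))"
proof (rule to_fps_inj)
  have "to_fps (sscale (1 / fact k) (spow (A + B) k)) =
     mconst (1 / fact k) * (\<Sum>i\<le>k. of_nat (k choose i) * to_fps A ^ i * to_fps B ^ (k - i))"
    by (simp add: to_fps_simps binomial_ring)
  also have "\<dots> = (\<Sum>i\<le>k. mconst (1 / fact k * of_nat (k choose i)) * (to_fps A ^ i * to_fps B ^ (k - i)))"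
    by (unfold sum_distrib_left, intro sum.cong refl, unfold mconst_mult mconst_of_nat)
       (simp only: mult.assoc)
  also have "\<dots> = (\<Sum>i\<le>k. mconst (1 / fact i * (1 / fact (k - i))) * (to_fps A ^ i * to_fps B ^ (k - i)))"
    by (rule sum.cong) (simp_all add: binomial_fact)
  finally show "to_fps (sscale (1 / fact k) (spow (A + B) k)) = to_fps (\<Sum>i\<le>k.
      sscale (1 / fact i * (1 / fact (k - i))) (smult (spow A i) (spow B (k - i))))"
    by (simp add: to_fps_simps)
qed

lemma sexp_add:
  assumes "positive_degree A" "positive_degree B"
  shows "sexp (A + B) = smult (sexp A) (sexp B)"
proof -
  let ?H = "\<lambda>i j. sscale (1 / fact i * (1 / fact j)) (smult (spow A i) (spow B j))"
  have "smult (sexp A) (sexp B) = fsum (\<lambda>(i,j).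
      smult (sscale (fps_exp 1 $ i) (spow A i)) (sscale (fps_exp 1 $ j) (spow B j)))"
    unfolding sexp_def eval_fps_def by (rule smult_fsum_fsum) (auto intro: locally_finite_powers assms)
  also have "\<dots> = fsum (\<lambda>(i,j). ?H i j)"
    by (rule fsum_cong) (auto simp: smult_sscale sscale_sscale mult.commute)
  also have "\<dots> = fsum (\<lambda>k. \<Sum>i\<le>k. ?H i (k - i))"
    by (rule fsum_regroup_diagonals)
       (intro locally_finite_imp_pointwise_finite locally_finite_double_powers assms)
  also have "\<dots> = sexp (A + B)"
    unfolding sexp_def eval_fps_def by (rule fsum_cong) (simp add: sscale_spow_add_binomial)
  finally show ?thesis ..
qed

lemma sexp_times_add:
  "positive_degree A \<Longrightarrow> positive_degree B \<Longrightarrow>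
     sexp_times (A + B) v = smult (sexp_times A v) (sexp_times B v)"
  unfolding sexp_times_def sscale_add by (rule sexp_add) (auto intro: positive_degree_sscale)

lemma sexp_times_add_nat:
  "positive_degree A \<Longrightarrow> sexp_times A (v + w) = smult (sexp_times A v) (sexp_times A w)"
  unfolding sexp_times_def of_nat_add sscale_add_left
  by (rule sexp_add) (auto intro: positive_degree_sscale)


lemma to_fps_sexp_times:
  assumes "positive_degree A"
  shows "to_fps (sexp_times A n) = to_fps (sexp A) ^ n"
proof (induction n)
  case 0 thus ?case by (simp add: sexp_times_def sexp_zero to_fps_sone)
next
  case (Suc n)
  thus ?case using sexp_times_add_nat[OF assms, of 1 n] by (simp add: to_fps_smult sexp_times_def)
qed

lemma sexp_times_expand: "sexp_times Z v = fsum (\<lambda>e. sscale (of_nat v ^ e / fact e) (spow Z e))"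
  unfolding sexp_times_def sexp_def eval_fps_def
  by (rule fsum_cong) (simp add: spow_sscale sscale_sscale)

lemma sexp_uminus: "positive_degree D \<Longrightarrow> smult (sexp D) (sexp (- D)) = sone"
  using sexp_add[of D "- D"] by (simp add: sexp_zero positive_degree_uminus)

section \<open>The Bernoulli series\<close>

definition bernoulli_fps :: "rat fps" where
  "bernoulli_fps = fps_X / (fps_exp 1 - 1)"

lemma bernoulli_div_fact: "bernoulli k / fact k = bernoulli_fps $ k"
  by (simp add: bernoulli_def bernoulli_fps_def)

lemma bernoulli_fps_times: "bernoulli_fps * (fps_exp 1 - 1) = fps_X"
  unfolding bernoulli_fps_def
proof (rule fps_times_divide_eq)
  have "(fps_exp 1 - 1 :: rat fps) $ 1 \<noteq> 0" by simp
  thus "fps_exp (1::rat) - 1 \<noteq> 0" by force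
  have "subdegree (fps_exp (1::rat) - 1) = 1" by (rule subdegreeI) auto
  thus "subdegree (fps_exp (1::rat) - 1) \<le> subdegree (fps_X :: rat fps)" by simp
qed

lemma fps_X_times_shift_bernoulli_fps: "fps_X * fps_shift 1 bernoulli_fps = bernoulli_fps - 1"
proof -
  have "(bernoulli_fps * (fps_exp 1 - 1)) $ 1 = 1" by (simp add: bernoulli_fps_times)
  hence "bernoulli_fps $ 0 = 1" by simp
  thus ?thesis by (intro fps_ext) simp
qed

lemma eval_bernoulli_times_sexp:
  assumes "positive_degree D"
  shows "smult (eval_fps bernoulli_fps D) (sexp D - sone) = D"
proof -
  have "sexp D - sone = eval_fps (fps_exp 1 - 1) D"
    by (simp add: sexp_def eval_fps_diff[OF assms] eval_fps_1)
  thus ?thesis by (simp add: eval_fps_mult[OF assms, symmetric] bernoulli_fps_times eval_fps_X)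
qed

text \<open>\<open>bernoulli_shift D\<close> is \<open>\<Sum>k\<ge>1. B_k/k! D^(k-1)\<close>, i.e.\ \<open>(D/(e^D - 1) - 1)/D\<close>.\<close>

definition bernoulli_shift :: "ser \<Rightarrow> ser" where
  "bernoulli_shift D = eval_fps (fps_shift 1 bernoulli_fps) D"

lemma smult_bernoulli_shift:
  assumes "positive_degree D"
  shows "smult D (bernoulli_shift D) = eval_fps bernoulli_fps D - sone"
proof -
  have "smult D (bernoulli_shift D) = eval_fps (fps_X * fps_shift 1 bernoulli_fps) D"
    by (simp add: bernoulli_shift_def eval_fps_mult[OF assms] eval_fps_X)
  thus ?thesis unfolding fps_X_times_shift_bernoulli_fps eval_fps_diff[OF assms] eval_fps_1 .
qed

lemma locally_finite_shifted_powers: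
  assumes "positive_degree D"
  shows "locally_finite (\<lambda>k. if k = 0 then 0 else smult (sscale (c k) (spow D (k - 1))) T)"
proof (rule locally_finite_by_order[where I="{k. k \<noteq> 0}" and q="\<lambda>_. 0" and d="\<lambda>k. k - 1"])
  fix k :: nat
  have "order_ge (smult (sscale (c k) (spow D (k - 1))) T) (0 + 0) ((k - 1) + 0)"
    by (intro order_ge_smult order_ge_sscale positive_degree_spow assms order_ge_0_0)
  thus "order_ge (if k = 0 then 0 else smult (sscale (c k) (spow D (k - 1))) T) 0 (k - 1)"
    by simp
next
  show "finite {k \<in> {k. k \<noteq> 0}. 0 + (k - 1) \<le> N}" for N :: nat
    by (rule finite_subset[of _ "{..Suc N}"]) auto
qed auto

lemma fsum_shifted_bernoulli:
  assumes "positive_degree D"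
  shows "fsum (\<lambda>k. if k = 0 then 0 else smult (sscale (bernoulli_fps $ k) (spow D (k - 1))) T)
       = smult (bernoulli_shift D) T"
proof -
  have "fsum (\<lambda>k. if k = 0 then 0 else smult (sscale (bernoulli_fps $ k) (spow D (k - 1))) T)
      = fsum (\<lambda>j. smult (sscale (bernoulli_fps $ Suc j) (spow D j)) T)"
    by (rule fsum_reindex[where A="{k. k \<noteq> 0}" and B=UNIV and h="\<lambda>k. k - 1" and k=Suc]) auto
  also have "\<dots> = smult (bernoulli_shift D) T"
    unfolding bernoulli_shift_def eval_fps_def
    by (subst fsum_smult_right) (auto intro: locally_finite_powers assms)
  finally show ?thesis .
qed

lemma bernoulli_series_eq:
  assumes "positive_degree D"
  shows "fsum (\<lambda>k::nat. if k = 0 then 0 else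
                sscale (bernoulli k / fact k)
                  (smult (spow D (k - 1)) (T1 + sscale ((-1) ^ (k - 1)) T2)))
       = smult (bernoulli_shift D) T1 + smult (bernoulli_shift (- D)) T2"
proof -
  have "fsum (\<lambda>k::nat. if k = 0 then 0 else
                sscale (bernoulli k / fact k)
                  (smult (spow D (k - 1)) (T1 + sscale ((-1) ^ (k - 1)) T2)))
     = fsum (\<lambda>k. (if k = 0 then 0 else smult (sscale (bernoulli_fps $ k) (spow D (k - 1))) T1)
             + (if k = 0 then 0 else smult (sscale (bernoulli_fps $ k) (spow (- D) (k - 1))) T2))"
    by (rule fsum_cong)
       (simp add: bernoulli_div_fact smult_add smult_sscale sscale_add sscale_sscale
          uminus_eq_sscale spow_sscale mult.commute)
  also have "\<dots> = smult (bernoulli_shift D) T1 + smult (bernoulli_shift (- D)) T2"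
    by (subst fsum_add)
       (simp_all add: locally_finite_imp_pointwise_finite locally_finite_shifted_powers
          fsum_shifted_bernoulli assms positive_degree_uminus)
  finally show ?thesis .
qed

section \<open>Geometric sums of exponentials\<close>

definition mixed_power_sum :: "'a::comm_ring_1 \<Rightarrow> 'a \<Rightarrow> nat \<Rightarrow> 'a" where
  "mixed_power_sum x y n = (\<Sum>i\<in>{1..<n}. x ^ i * y ^ (n - i))"

lemma mixed_power_sum_Suc:
  assumes "1 \<le> n"
  shows "mixed_power_sum x y (Suc n) = mixed_power_sum x y n * y + x ^ n * y"
proof -
  have "mixed_power_sum x y (Suc n) = (\<Sum>i\<in>{1..<n}. x ^ i * y ^ (Suc n - i)) + x ^ n * y"
    unfolding mixed_power_sum_def using assms by (simp add: atLeastLessThanSuc)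
  also have "(\<Sum>i\<in>{1..<n}. x ^ i * y ^ (Suc n - i)) = mixed_power_sum x y n * y"
    unfolding mixed_power_sum_def sum_distrib_right
    by (rule sum.cong) (simp_all add: Suc_diff_le ac_simps)
  finally show ?thesis .
qed

lemma mixed_power_sum_telescope:
  "1 \<le> n \<Longrightarrow> (x - y) * mixed_power_sum x y n = x ^ n * y - x * y ^ n"
proof (induction n rule: dec_induct)
  case base thus ?case by (simp add: mixed_power_sum_def)
next
  case (step n)
  have "(x - y) * mixed_power_sum x y (Suc n) = ((x - y) * mixed_power_sum x y n) * y + (x - y) * x ^ n * y"
    using step(1) by (simp add: mixed_power_sum_Suc algebra_simps)
  also have "\<dots> = (x ^ n * y - x * y ^ n) * y + (x - y) * x ^ n * y"
    using step(3) by simp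
  also have "\<dots> = x ^ Suc n * y - x * y ^ Suc n"
    by (simp add: algebra_simps)
  finally show ?case .
qed

text \<open>Here \<open>x = e^A\<close>, \<open>y = e^B\<close>, \<open>e = e^D\<close> with \<open>D = A - B\<close>, \<open>e' = e^-D\<close>,
  \<open>g = D/(e^D - 1)\<close>, \<open>g' = -D/(e^-D - 1)\<close>, and \<open>b, b'\<close> are the shifted Bernoulli series
  of \<open>D\<close> and \<open>-D\<close>; only the relations between them are used.\<close>

lemma mixed_power_sum_bernoulli:
  fixes x y e e' g g' b b' d :: "'a::idom"
  assumes x: "x = y * e" and e': "e' * e = 1"
    and g: "g * (e - 1) = d" and g': "g' * (e' - 1) = - d"
    and b: "d * b = g - 1" and b': "(- d) * b' = g' - 1"
    and nz: "y \<noteq> 0" "e \<noteq> 1" and n: "1 \<le> n"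
  shows "d * (mixed_power_sum x y n - b * x ^ n - b' * y ^ n) = x ^ n - y ^ n"
proof -
  have c: "y * (e - 1) \<noteq> 0" using nz by simp
  have "y * (e - 1) * (d * mixed_power_sum x y n) = d * ((x - y) * mixed_power_sum x y n)"
    using x by (simp add: algebra_simps)
  also have "\<dots> = d * (x ^ n * y - x * y ^ n)" by (simp only: mixed_power_sum_telescope[OF n])
  also have "\<dots> = y * (g * (e - 1)) * x ^ n - y * (e * d) * y ^ n"
    using g x by (simp add: algebra_simps)
  also have "e * d = g' * (e - 1)"
  proof -
    have "g' * (e - 1) = - e * (g' * (e' - 1))" using e' by (simp add: algebra_simps)
    thus ?thesis using g' by simp
  qed
  also have "y * (g * (e - 1)) * x ^ n - y * (g' * (e - 1)) * y ^ n
      = y * (e - 1) * (g * x ^ n - g' * y ^ n)"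
    by (simp add: algebra_simps)
  finally have sum: "d * mixed_power_sum x y n = g * x ^ n - g' * y ^ n"
    using c by (metis mult_left_cancel)
  have "d * (mixed_power_sum x y n - b * x ^ n - b' * y ^ n)
      = d * mixed_power_sum x y n - (d * b) * x ^ n + ((- d) * b') * y ^ n"
    by (simp add: algebra_simps)
  also have "\<dots> = x ^ n - y ^ n" unfolding sum b b' by (simp add: algebra_simps)
  finally show ?thesis .
qed

definition sexp_mixed_sum :: "ser \<Rightarrow> ser \<Rightarrow> nat \<Rightarrow> ser" where
  "sexp_mixed_sum A B n = (\<Sum>i\<in>{1..<n}. smult (sexp_times A i) (sexp_times B (n - i)))"

lemma to_fps_sexp_mixed_sum:
  "positive_degree A \<Longrightarrow> positive_degree B \<Longrightarrow>
     to_fps (sexp_mixed_sum A B n) = mixed_power_sum (to_fps (sexp A)) (to_fps (sexp B)) n"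
  unfolding sexp_mixed_sum_def mixed_power_sum_def by (simp add: to_fps_simps to_fps_sexp_times)

lemma sexp_mixed_sum_bernoulli:
  assumes A: "positive_degree A" and B: "positive_degree B" and "A \<noteq> B" "1 \<le> n"
  shows "smult (A - B) (sexp_mixed_sum A B n - smult (bernoulli_shift (A - B)) (sexp_times A n)
           - smult (bernoulli_shift (- (A - B))) (sexp_times B n))
       = sexp_times A n - sexp_times B n"
proof -
  define D where "D = A - B"
  have D: "positive_degree D" "positive_degree (- D)"
    unfolding D_def by (auto intro: positive_degree_diff positive_degree_uminus A B)
  have "to_fps (sexp B) * to_fps (sexp (- B)) = 1"
    using arg_cong[OF sexp_uminus[OF B], of to_fps] by (simp add: to_fps_simps)
  hence y: "to_fps (sexp B) \<noteq> 0" by auto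
  have e: "to_fps (sexp D) \<noteq> 1"
  proof
    assume "to_fps (sexp D) = 1"
    hence "sexp D = sone" using to_fps_sone to_fps_inj by metis
    hence "D = 0" using eval_bernoulli_times_sexp[OF D(1)] by simp
    thus False using \<open>A \<noteq> B\<close> by (simp add: D_def)
  qed
  have "A = B + D" by (simp add: D_def)
  hence x: "to_fps (sexp A) = to_fps (sexp B) * to_fps (sexp D)"
    by (simp add: sexp_add[OF B D(1)] to_fps_smult)
  have "to_fps D * (mixed_power_sum (to_fps (sexp A)) (to_fps (sexp B)) n
      - to_fps (bernoulli_shift D) * to_fps (sexp A) ^ n
      - to_fps (bernoulli_shift (- D)) * to_fps (sexp B) ^ n)
      = to_fps (sexp A) ^ n - to_fps (sexp B) ^ n"
  proof (rule mixed_power_sum_bernoulli[OF x _ _ _ _ _ y e \<open>1 \<le> n\<close>])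
    show "to_fps (sexp (- D)) * to_fps (sexp D) = 1"
      using arg_cong[OF sexp_uminus[OF D(1)], of to_fps] by (simp add: to_fps_simps mult.commute)
    show "to_fps (eval_fps bernoulli_fps D) * (to_fps (sexp D) - 1) = to_fps D"
      using arg_cong[OF eval_bernoulli_times_sexp[OF D(1)], of to_fps] by (simp add: to_fps_simps)
    show "to_fps (eval_fps bernoulli_fps (- D)) * (to_fps (sexp (- D)) - 1) = - to_fps D"
      using arg_cong[OF eval_bernoulli_times_sexp[OF D(2)], of to_fps] by (simp add: to_fps_simps)
    show "to_fps D * to_fps (bernoulli_shift D) = to_fps (eval_fps bernoulli_fps D) - 1"
      using arg_cong[OF smult_bernoulli_shift[OF D(1)], of to_fps] by (simp add: to_fps_simps)
    show "- to_fps D * to_fps (bernoulli_shift (- D)) = to_fps (eval_fps bernoulli_fps (- D)) - 1"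
      using arg_cong[OF smult_bernoulli_shift[OF D(2)], of to_fps] by (simp add: to_fps_simps)
  qed
  thus ?thesis unfolding D_def[symmetric]
    by (intro to_fps_inj)
       (simp add: to_fps_simps to_fps_sexp_mixed_sum[OF A B] to_fps_sexp_times[OF A] to_fps_sexp_times[OF B])
qed

section \<open>Lambert sums\<close>

definition qpow :: "nat \<Rightarrow> ser" where
  "qpow N = (\<lambda>m. if m = (N,0,0,0,0) then 1 else 0)"

lemma to_fps_qpow: "to_fps (qpow N) = fps_X ^ N"
  by (intro fps_ext) (auto simp: to_fps_nth qpow_def fps_X_power_nth)

lemma smult_qpow_qpow: "smult (smult (qpow a) P) (smult (qpow b) Q) = smult (qpow (a + b)) (smult P Q)"
  by (rule to_fps_inj) (simp add: to_fps_smult to_fps_qpow power_add ac_simps)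

lemma order_ge_qpow: "order_ge (qpow N) N 0"
  by (rule order_geI) (auto simp: qpow_def split: if_splits)

lemma locally_finite_qpow_family:
  assumes "\<And>N. finite {i. P i \<and> f i \<le> N}"
  shows "locally_finite (\<lambda>i. if P i then smult (qpow (f i)) (X i) else 0)"
proof (rule locally_finite_by_order[where I="{i. P i}" and q=f and d="\<lambda>_. 0"])
  show "order_ge (if P i then smult (qpow (f i)) (X i) else 0) (f i) 0" for i
    using order_ge_smult[OF order_ge_qpow order_ge_0_0, of "f i" "X i"] by simp
qed (use assms in auto)

lemma pos_mult_le_bound:
  assumes "0 < (w::nat)" "0 < n" "w * n \<le> N"
  shows "w \<le> N \<and> n \<le> N"
proof -
  have "w \<le> w * n" "n \<le> w * n" using assms(1,2) by simp_all
  thus ?thesis using assms(3) by linarith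
qed

definition lambert_terms :: "(nat \<Rightarrow> nat \<Rightarrow> ser) \<Rightarrow> nat \<times> nat \<Rightarrow> ser" where
  "lambert_terms X = (\<lambda>(w,n). if 0 < w \<and> 0 < n then smult (qpow (w * n)) (X w n) else 0)"

definition lambert :: "(nat \<Rightarrow> nat \<Rightarrow> ser) \<Rightarrow> ser" where
  "lambert X = fsum (lambert_terms X)"

lemma locally_finite_lambert_terms: "locally_finite (lambert_terms X)"
proof -
  have "lambert_terms X = (\<lambda>i. if (case i of (w,n) \<Rightarrow> 0 < w \<and> 0 < n)
      then smult (qpow (case i of (w,n) \<Rightarrow> w * n)) (case i of (w,n) \<Rightarrow> X w n) else 0)"
    by (auto simp: lambert_terms_def)
  moreover have "finite {(w::nat,n::nat). (0 < w \<and> 0 < n) \<and> w * n \<le> N}" for N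
    by (rule finite_subset[of _ "{..N} \<times> {..N}"]) (auto dest: pos_mult_le_bound)
  ultimately show ?thesis
    by (simp only:) (rule locally_finite_qpow_family, simp add: case_prod_unfold)
qed

lemma pointwise_finite_lambert_terms: "pointwise_finite (lambert_terms X)"
  by (rule locally_finite_imp_pointwise_finite[OF locally_finite_lambert_terms])

lemma smult_lambert: "smult Y (lambert X) = lambert (\<lambda>w n. smult Y (X w n))"
  unfolding lambert_def
  by (subst fsum_smult[OF locally_finite_lambert_terms])
     (rule fsum_cong, auto simp: lambert_terms_def smult_left_commute)

lemma lambert_add: "lambert X + lambert Y = lambert (\<lambda>w n. X w n + Y w n)"
  unfolding lambert_def
  by (subst fsum_add[symmetric, OF pointwise_finite_lambert_terms pointwise_finite_lambert_terms])
     (rule fsum_cong, auto simp: lambert_terms_def smult_add)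

lemma lambert_diff: "lambert X - lambert Y = lambert (\<lambda>w n. X w n - Y w n)"
  unfolding lambert_def
  by (subst fsum_diff[symmetric, OF pointwise_finite_lambert_terms pointwise_finite_lambert_terms])
     (rule fsum_cong, auto simp: lambert_terms_def smult_diff)

lemma lambert_cong:
  "(\<And>w n. 0 < w \<Longrightarrow> 0 < n \<Longrightarrow> X w n = Y w n) \<Longrightarrow> lambert X = lambert Y"
  unfolding lambert_def by (rule fsum_cong) (auto simp: lambert_terms_def)

lemma lambert_swap: "lambert X = lambert (\<lambda>a b. X b a)"
  unfolding lambert_def
  by (rule fsum_reindex[where A=UNIV and B=UNIV and h=prod.swap and k=prod.swap])
     (auto simp: lambert_terms_def mult.commute)

definition diagonal_sum :: "ser \<Rightarrow> ser \<Rightarrow> ser \<Rightarrow> ser" where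
  "diagonal_sum C A B = fsum (\<lambda>(w,i,j). if 0 < w \<and> 0 < i \<and> 0 < j
      then smult (qpow (w * (i + j))) (smult (sexp_times C w) (smult (sexp_times A i) (sexp_times B j)))
      else 0)"

lemma diagonal_sum_lambert:
  "diagonal_sum C A B = lambert (\<lambda>w n. smult (sexp_times C w) (sexp_mixed_sum A B n))"
proof -
  let ?X = "\<lambda>w n i. smult (sexp_times C w) (smult (sexp_times A i) (sexp_times B (n - i)))"
  let ?F = "\<lambda>(w,n) i. if 0 < w \<and> 0 < i \<and> i < n then smult (qpow (w * n)) (?X w n i) else 0"
  have "diagonal_sum C A B = fsum (\<lambda>(wn,i). ?F wn i)"
    unfolding diagonal_sum_def
    by (rule fsum_reindex[where A="{(w,i,j). 0 < w \<and> 0 < i \<and> 0 < j}"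
          and B="{((w,n),i). 0 < w \<and> 0 < i \<and> i < n}"
          and h="\<lambda>(w,i,j). ((w, i + j), i)" and k="\<lambda>((w,n),i). (w, i, n - i)"]) auto
  also have "\<dots> = fsum (\<lambda>wn. fsum (?F wn))"
  proof (rule fsum_fsum[symmetric])
    have "finite {((w::nat,n::nat),i::nat). (0 < w \<and> 0 < i \<and> i < n) \<and> w * n \<le> N}" for N
    proof (rule finite_subset[of _ "({..N} \<times> {..N}) \<times> {..N}"], rule subsetI)
      fix x assume "x \<in> {((w::nat,n::nat),i::nat). (0 < w \<and> 0 < i \<and> i < n) \<and> w * n \<le> N}"
      then obtain w n i where "x = ((w,n),i)" "0 < w" "i < n" "w * n \<le> N" by auto
      thus "x \<in> ({..N} \<times> {..N}) \<times> {..N}" using pos_mult_le_bound[of w n N] by auto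
    qed auto
    hence "locally_finite (\<lambda>x. if (case x of ((w,n),i) \<Rightarrow> 0 < w \<and> 0 < i \<and> i < n)
        then smult (qpow (case x of ((w,n),i) \<Rightarrow> w * n)) (case x of ((w,n),i) \<Rightarrow> ?X w n i) else 0)"
      by (intro locally_finite_qpow_family) (simp add: case_prod_unfold)
    thus "pointwise_finite (\<lambda>(wn,i). ?F wn i)"
      by (rule locally_finite_imp_pointwise_finite[OF locally_finite_subfamily])
         (auto split: prod.splits if_splits)
  qed
  also have "\<dots> = lambert (\<lambda>w n. smult (sexp_times C w) (sexp_mixed_sum A B n))"
    unfolding lambert_def
  proof (rule fsum_cong)
    fix wn :: "nat \<times> nat"
    obtain w n where wn: "wn = (w,n)" by (cases wn)
    have "fsum (?F (w,n)) = (\<Sum>i\<in>{1..<n}. if 0 < w then smult (qpow (w * n)) (?X w n i) else 0)"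
      by (subst fsum_finite[where A="{1..<n}"]) auto
    thus "fsum (?F wn) = lambert_terms (\<lambda>w n. smult (sexp_times C w) (sexp_mixed_sum A B n)) wn"
      by (auto simp: wn lambert_terms_def sexp_mixed_sum_def smult_sum)
  qed
  finally show ?thesis .
qed

lemma diagonal_sum_eq:
  fixes C :: ser
  assumes "positive_degree A" "positive_degree B" "A \<noteq> B"
  defines "TA \<equiv> lambert (\<lambda>w n. smult (sexp_times C w) (sexp_times A n))"
    and "TB \<equiv> lambert (\<lambda>w n. smult (sexp_times C w) (sexp_times B n))"
  shows "diagonal_sum C A B = sdiv (TA - TB) (A - B)
     + fsum (\<lambda>k::nat. if k = 0 then 0 else
         sscale (bernoulli k / fact k) (smult (spow (A - B) (k - 1)) (TA + sscale ((-1) ^ (k - 1)) TB)))"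
proof -
  define D where "D = A - B"
  define R where "R n = sexp_mixed_sum A B n - smult (bernoulli_shift D) (sexp_times A n)
      - smult (bernoulli_shift (- D)) (sexp_times B n)" for n
  have "smult D (lambert (\<lambda>w n. smult (sexp_times C w) (R n))) = TA - TB"
    unfolding smult_lambert TA_def TB_def lambert_diff
  proof (rule lambert_cong)
    fix w n :: nat assume "0 < n"
    hence "smult D (R n) = sexp_times A n - sexp_times B n"
      unfolding D_def R_def by (intro sexp_mixed_sum_bernoulli assms) simp
    thus "smult D (smult (sexp_times C w) (R n))
        = smult (sexp_times C w) (sexp_times A n) - smult (sexp_times C w) (sexp_times B n)"
      by (subst smult_left_commute) (simp only: smult_diff)
  qed
  hence "sdiv (TA - TB) D = lambert (\<lambda>w n. smult (sexp_times C w) (R n))"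
    by (intro sdiv_unique) (use assms(3) in \<open>auto simp: D_def\<close>)
  also have "\<dots> = diagonal_sum C A B - (smult (bernoulli_shift D) TA + smult (bernoulli_shift (- D)) TB)"
    unfolding diagonal_sum_lambert TA_def TB_def smult_lambert lambert_add lambert_diff R_def
    by (rule lambert_cong) (simp add: smult_diff smult_left_commute[of "bernoulli_shift _"])
  finally have "sdiv (TA - TB) D
      = diagonal_sum C A B - (smult (bernoulli_shift D) TA + smult (bernoulli_shift (- D)) TB)" .
  moreover have "fsum (\<lambda>k::nat. if k = 0 then 0 else
         sscale (bernoulli k / fact k) (smult (spow D (k - 1)) (TA + sscale ((-1) ^ (k - 1)) TB)))
      = smult (bernoulli_shift D) TA + smult (bernoulli_shift (- D)) TB"
    unfolding D_def by (intro bernoulli_series_eq positive_degree_diff assms(1,2))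
  ultimately show ?thesis unfolding D_def[symmetric] by simp
qed

section \<open>Expanding the generating series\<close>

lemma qser_eq_fsum:
  assumes "\<And>N. finite {u. P u \<and> g u = N}"
  shows "qser (\<lambda>N. \<Sum>u\<in>{u. P u \<and> g u = N}. w u) = fsum (\<lambda>u. if P u then sscale (w u) (qpow (g u)) else 0)"
proof
  fix m :: mono
  obtain n a b c d where m: "m = (n,a,b,c,d)" by (cases m) auto
  have "fsum (\<lambda>u. if P u then sscale (w u) (qpow (g u)) else 0) m
      = (\<Sum>u\<in>{u. P u \<and> g u = n}. (if P u then sscale (w u) (qpow (g u)) else 0) m)"
    by (rule fsum_eq_sum_superset[OF assms]) (auto simp: m sscale_def qpow_def)
  also have "\<dots> = (\<Sum>u\<in>{u. P u \<and> g u = n}. if a = 0 \<and> b = 0 \<and> c = 0 \<and> d = 0 then w u else 0)"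
    by (rule sum.cong) (auto simp: m sscale_def qpow_def)
  finally show "qser (\<lambda>N. \<Sum>u\<in>{u. P u \<and> g u = N}. w u) m
      = fsum (\<lambda>u. if P u then sscale (w u) (qpow (g u)) else 0) m"
    by (simp add: m qser_def)
qed

lemma fsum_swap:
  assumes "pointwise_finite (\<lambda>(i,j). F i j)"
  shows "fsum (\<lambda>i. fsum (F i)) = fsum (\<lambda>j. fsum (\<lambda>i. F i j))"
proof -
  have "pointwise_finite (\<lambda>(j,i). F i j)"
  proof (rule pointwise_finiteI)
    fix m
    have "{ji. (case ji of (j,i) \<Rightarrow> F i j) m \<noteq> 0} = prod.swap ` {ij. (case ij of (i,j) \<Rightarrow> F i j) m \<noteq> 0}"
      by force
    thus "finite {ji. (case ji of (j,i) \<Rightarrow> F i j) m \<noteq> 0}" using pointwise_finiteD[OF assms] by simp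
  qed
  moreover have "fsum (\<lambda>(i,j). F i j) = fsum (\<lambda>(j,i). F i j)"
    by (rule fsum_reindex[where A=UNIV and B=UNIV and h=prod.swap and k=prod.swap]) auto
  ultimately show ?thesis using fsum_fsum[OF assms] fsum_fsum[of "\<lambda>j i. F i j"] by simp
qed

lemma fsum_qser_exchange:
  fixes P :: "'u \<Rightarrow> bool" and g :: "'u \<Rightarrow> nat" and w :: "'u \<Rightarrow> 'e \<Rightarrow> rat"
    and M :: "'e \<Rightarrow> ser" and dg :: "'e \<Rightarrow> nat"
  assumes coeff: "\<And>e. c e = (\<lambda>N. \<Sum>u\<in>{u. P u \<and> g u = N}. w u e)"
    and fin_u: "\<And>N. finite {u. P u \<and> g u \<le> N}"
    and order_M: "\<And>e. order_ge (M e) 0 (dg e)" and fin_e: "\<And>N. finite {e. dg e \<le> N}"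
    and inner: "\<And>u. P u \<Longrightarrow> fsum (\<lambda>e. sscale (w u e) (M e)) = E u"
  shows "fsum (\<lambda>e. smult (qser (c e)) (M e)) = fsum (\<lambda>u. if P u then smult (qpow (g u)) (E u) else 0)"
proof -
  let ?J = "\<lambda>e u. if P u then sscale (w u e) (smult (qpow (g u)) (M e)) else 0"
  have fibre: "finite {u. P u \<and> g u = N}" for N by (rule finite_subset[OF _ fin_u[of N]]) auto
  have lf_u: "locally_finite (\<lambda>u. if P u then sscale (w u e) (qpow (g u)) else 0)" for e
    by (rule locally_finite_by_order[where I="{u. P u}" and q=g and d="\<lambda>_. 0"])
       (use fin_u in \<open>auto intro: order_ge_sscale order_ge_qpow\<close>)
  have lf_e: "locally_finite (\<lambda>e. sscale (w u e) (M e))" for u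
    by (rule locally_finite_by_order[where I=UNIV and q="\<lambda>_. 0" and d=dg])
       (use fin_e in \<open>auto intro: order_ge_sscale order_M\<close>)
  have pf_eu: "pointwise_finite (\<lambda>(e,u). ?J e u)"
  proof (rule locally_finite_imp_pointwise_finite,
      rule locally_finite_by_order[where I="{(e,u). P u}" and q="\<lambda>(e,u). g u" and d="\<lambda>(e,u). dg e"])
    show "order_ge ((\<lambda>(e,u). ?J e u) eu) ((\<lambda>(e,u). g u) eu) ((\<lambda>(e,u). dg e) eu)" for eu
      using order_ge_smult[OF order_ge_qpow order_M] by (auto intro: order_ge_sscale split: prod.splits)
    show "finite {eu \<in> {(e,u). P u}. (\<lambda>(e,u). g u) eu + (\<lambda>(e,u). dg e) eu \<le> N}" for N
      by (rule finite_subset[of _ "{e. dg e \<le> N} \<times> {u. P u \<and> g u \<le> N}"]) (use fin_e fin_u in auto)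
  qed auto
  have "fsum (\<lambda>e. smult (qser (c e)) (M e)) = fsum (\<lambda>e. fsum (\<lambda>u. ?J e u))"
    unfolding coeff qser_eq_fsum[OF fibre] fsum_smult_right[OF lf_u]
    by (intro fsum_cong) (simp add: smult_sscale)
  also have "\<dots> = fsum (\<lambda>u. fsum (\<lambda>e. ?J e u))" by (rule fsum_swap[OF pf_eu])
  also have "\<dots> = fsum (\<lambda>u. if P u then smult (qpow (g u)) (E u) else 0)"
  proof (rule fsum_cong)
    fix u show "fsum (\<lambda>e. ?J e u) = (if P u then smult (qpow (g u)) (E u) else 0)"
    proof (cases "P u")
      case True
      have "fsum (\<lambda>e. ?J e u) = fsum (\<lambda>e. smult (qpow (g u)) (sscale (w u e) (M e)))"
        by (rule fsum_cong) (simp add: True smult_sscale)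
      also have "\<dots> = smult (qpow (g u)) (E u)"
        by (simp add: fsum_smult[OF lf_e, symmetric] inner True)
      finally show ?thesis using True by simp
    qed simp
  qed
  finally show ?thesis .
qed

lemma bibracket_depth_one:
  "bibracket [Suc e] [f] N = (\<Sum>(u,v)\<in>{(u,v). 0 < u \<and> 0 < v \<and> u * v = N}.
     of_nat u ^ f / fact f * (of_nat v ^ e / fact e))"
proof -
  have S: "{(us,vs). length us = length [Suc e] \<and> length vs = length [Suc e] \<and> sorted_wrt (>) us \<and>
      (\<forall>x\<in>set us. 0 < x) \<and> (\<forall>x\<in>set vs. 0 < x) \<and> (\<Sum>j<length [Suc e]. us ! j * vs ! j) = N}
    = (\<lambda>(u,v). ([u],[v])) ` {(u,v). 0 < u \<and> 0 < v \<and> u * v = N}"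
    by (auto simp: length_Suc_conv image_iff)
  have inj: "inj_on (\<lambda>(u::nat,v::nat). ([u],[v])) A" for A by (auto intro: inj_onI)
  show ?thesis unfolding bibracket_def S sum.reindex[OF inj] by (simp add: case_prod_unfold)
qed

lemma bibracket_depth_two:
  "bibracket [Suc e1, Suc e2] [f1, f2] N =
     (\<Sum>(u1,u2,v1,v2)\<in>{(u1,u2,v1,v2). u2 < u1 \<and> 0 < u2 \<and> 0 < v1 \<and> 0 < v2 \<and> u1 * v1 + u2 * v2 = N}.
        (of_nat u1 ^ f1 / fact f1 * (of_nat v1 ^ e1 / fact e1)) *
        (of_nat u2 ^ f2 / fact f2 * (of_nat v2 ^ e2 / fact e2)))"
proof -
  have S: "{(us,vs). length us = length [Suc e1, Suc e2] \<and> length vs = length [Suc e1, Suc e2] \<and>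
      sorted_wrt (>) us \<and> (\<forall>x\<in>set us. 0 < x) \<and> (\<forall>x\<in>set vs. 0 < x) \<and>
      (\<Sum>j<length [Suc e1, Suc e2]. us ! j * vs ! j) = N}
    = (\<lambda>(u1,u2,v1,v2). ([u1,u2],[v1,v2])) `
        {(u1,u2,v1,v2). u2 < u1 \<and> 0 < u2 \<and> 0 < v1 \<and> 0 < v2 \<and> u1 * v1 + u2 * v2 = N}"
    by (auto simp: length_Suc_conv numeral_2_eq_2 image_iff)
  have inj: "inj_on (\<lambda>(u1::nat,u2::nat,v1::nat,v2::nat). ([u1,u2],[v1,v2])) A" for A
    by (auto intro: inj_onI)
  show ?thesis unfolding bibracket_def S sum.reindex[OF inj] by (simp add: case_prod_unfold numeral_2_eq_2)
qed

lemma Tgen_length_one: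
  "Tgen [Z] [W] = fsum (\<lambda>(e,f). smult (qser (bibracket [Suc e] [f])) (smult (spow Z e) (spow W f)))"
  unfolding Tgen_def
  by (rule fsum_reindex[where A="{(es,fs). length es = 1 \<and> length fs = 1}" and B=UNIV
        and h="\<lambda>(es,fs). (hd es, hd fs)" and k="\<lambda>(e,f). ([e],[f])"])
     (auto simp: length_Suc_conv)

lemma Tgen_length_two:
  "Tgen [Z1, Z2] [W1, W2] = fsum (\<lambda>((e1,e2),(f1,f2)).
     smult (qser (bibracket [Suc e1, Suc e2] [f1, f2]))
       (smult (smult (spow Z1 e1) (spow Z2 e2)) (smult (spow W1 f1) (spow W2 f2))))"
  unfolding Tgen_def
  by (rule fsum_reindex[where A="{(es,fs). length es = 2 \<and> length fs = 2}" and B=UNIV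
        and h="\<lambda>(es,fs). ((es!0, es!1), (fs!0, fs!1))" and k="\<lambda>((e1,e2),(f1,f2)). ([e1,e2],[f1,f2])"])
     (auto simp: length_Suc_conv numeral_2_eq_2 split: if_splits)

lemma order_ge_spow_smult:
  "positive_degree Z \<Longrightarrow> positive_degree W \<Longrightarrow> order_ge (smult (spow Z e) (spow W f)) 0 (e + f)"
  using order_ge_smult[OF positive_degree_spow positive_degree_spow] by fastforce

lemma smult_sexp_times_expand:
  assumes "positive_degree Z" "positive_degree W"
  shows "smult (sexp_times Z v) (sexp_times W u) = fsum (\<lambda>(e,f).
    sscale (of_nat u ^ f / fact f * (of_nat v ^ e / fact e)) (smult (spow Z e) (spow W f)))"
proof -
  have "smult (sexp_times Z v) (sexp_times W u) = fsum (\<lambda>(e,f).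
      smult (sscale (of_nat v ^ e / fact e) (spow Z e)) (sscale (of_nat u ^ f / fact f) (spow W f)))"
    unfolding sexp_times_expand by (rule smult_fsum_fsum) (intro locally_finite_powers assms)+
  thus ?thesis by (simp add: smult_sscale sscale_sscale mult.commute case_prod_unfold)
qed

lemma Tgen_depth_one:
  assumes "positive_degree Z" "positive_degree W"
  shows "Tgen [Z] [W] = lambert (\<lambda>u v. smult (sexp_times Z v) (sexp_times W u))"
proof -
  let ?M = "\<lambda>(e,f). smult (spow Z e) (spow W f)"
  let ?E = "\<lambda>(u,v). smult (sexp_times Z v) (sexp_times W u)"
  have "Tgen [Z] [W] = fsum (\<lambda>ef. smult (qser ((\<lambda>(e,f). bibracket [Suc e] [f]) ef)) (?M ef))"
    unfolding Tgen_length_one by (rule fsum_cong) auto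
  also have "\<dots> = fsum (\<lambda>uv. if (\<lambda>(u,v). 0 < u \<and> 0 < v) uv
      then smult (qpow ((\<lambda>(u,v). u * v) uv)) (?E uv) else 0)"
    apply (rule fsum_qser_exchange[where dg="\<lambda>(e,f). e + f"
          and w="\<lambda>(u,v) (e,f). of_nat u ^ f / fact f * (of_nat v ^ e / fact e)"])
    subgoal by (rule ext) (simp add: bibracket_depth_one case_prod_unfold)
    subgoal for N by (rule finite_subset[of _ "{..N} \<times> {..N}"]) (auto dest: pos_mult_le_bound)
    subgoal using order_ge_spow_smult[OF assms] by (simp add: case_prod_unfold)
    subgoal for N by (rule finite_subset[of _ "{..N} \<times> {..N}"]) auto
    subgoal by (simp add: smult_sexp_times_expand[OF assms] case_prod_unfold)
    done
  also have "\<dots> = lambert (\<lambda>u v. smult (sexp_times Z v) (sexp_times W u))"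
    unfolding lambert_def lambert_terms_def by (rule fsum_cong) auto
  finally show ?thesis .
qed

lemma finite_depth_two_indices:
  "finite {(u1::nat,u2::nat,v1::nat,v2::nat). (u2 < u1 \<and> 0 < u2 \<and> 0 < v1 \<and> 0 < v2) \<and> u1 * v1 + u2 * v2 \<le> N}"
proof (rule finite_subset[of _ "{..N} \<times> {..N} \<times> {..N} \<times> {..N}"], rule subsetI)
  fix x assume "x \<in> {(u1::nat,u2::nat,v1::nat,v2::nat). (u2 < u1 \<and> 0 < u2 \<and> 0 < v1 \<and> 0 < v2) \<and> u1 * v1 + u2 * v2 \<le> N}"
  then obtain u1 u2 v1 v2 where x: "x = (u1,u2,v1,v2)" "u2 < u1" "0 < u2" "0 < v1" "0 < v2"
    "u1 * v1 + u2 * v2 \<le> N" by auto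
  hence "u1 * v1 \<le> N" "u2 * v2 \<le> N" "0 < u1" by auto
  thus "x \<in> {..N} \<times> {..N} \<times> {..N} \<times> {..N}"
    using x pos_mult_le_bound[of u1 v1 N] pos_mult_le_bound[of u2 v2 N] by simp
qed auto

lemma smult_sexp_times_expand2:
  assumes Z1: "positive_degree Z1" and Z2: "positive_degree Z2"
    and W1: "positive_degree W1" and W2: "positive_degree W2"
  shows "smult (smult (sexp_times Z1 v1) (sexp_times W1 u1)) (smult (sexp_times Z2 v2) (sexp_times W2 u2))
    = fsum (\<lambda>((e1,e2),(f1,f2)).
        sscale ((of_nat u1 ^ f1 / fact f1 * (of_nat v1 ^ e1 / fact e1)) *
                (of_nat u2 ^ f2 / fact f2 * (of_nat v2 ^ e2 / fact e2)))
          (smult (smult (spow Z1 e1) (spow Z2 e2)) (smult (spow W1 f1) (spow W2 f2))))"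
proof -
  let ?F = "\<lambda>Z W u v (e,f). sscale (of_nat u ^ f / fact f * (of_nat v ^ e / fact e))
    (smult (spow Z e) (spow W f))"
  have "smult (smult (sexp_times Z1 v1) (sexp_times W1 u1)) (smult (sexp_times Z2 v2) (sexp_times W2 u2))
      = smult (fsum (?F Z1 W1 u1 v1)) (fsum (?F Z2 W2 u2 v2))"
    by (simp add: smult_sexp_times_expand Z1 Z2 W1 W2 case_prod_unfold)
  also have "\<dots> = fsum (\<lambda>(p1,p2). smult (?F Z1 W1 u1 v1 p1) (?F Z2 W2 u2 v2 p2))"
    by (rule smult_fsum_fsum)
       (simp_all only: locally_finite_double_powers Z1 Z2 W1 W2 flip: case_prod_unfold)
  also have "\<dots> = fsum (\<lambda>((e1,e2),(f1,f2)).
        sscale ((of_nat u1 ^ f1 / fact f1 * (of_nat v1 ^ e1 / fact e1)) *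
                (of_nat u2 ^ f2 / fact f2 * (of_nat v2 ^ e2 / fact e2)))
          (smult (smult (spow Z1 e1) (spow Z2 e2)) (smult (spow W1 f1) (spow W2 f2))))"
    by (rule fsum_reindex[where A=UNIV and B=UNIV and h="\<lambda>((e1,f1),(e2,f2)). ((e1,e2),(f1,f2))"
          and k="\<lambda>((e1,e2),(f1,f2)). ((e1,f1),(e2,f2))"])
       (auto simp: smult_sscale sscale_sscale smult_ac mult_ac)
  finally show ?thesis .
qed

lemma Tgen_depth_two:
  assumes Z1: "positive_degree Z1" and Z2: "positive_degree Z2"
    and W1: "positive_degree W1" and W2: "positive_degree W2"
  shows "Tgen [Z1, Z2] [W1, W2] = fsum (\<lambda>(u1,u2,v1,v2). if u2 < u1 \<and> 0 < u2 \<and> 0 < v1 \<and> 0 < v2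
     then smult (qpow (u1 * v1 + u2 * v2))
       (smult (smult (sexp_times Z1 v1) (sexp_times W1 u1)) (smult (sexp_times Z2 v2) (sexp_times W2 u2)))
     else 0)" (is "_ = ?rhs")
proof -
  let ?M = "\<lambda>((e1,e2),(f1,f2)). smult (smult (spow Z1 e1) (spow Z2 e2)) (smult (spow W1 f1) (spow W2 f2))"
  let ?E = "\<lambda>(u1,u2,v1,v2).
    smult (smult (sexp_times Z1 v1) (sexp_times W1 u1)) (smult (sexp_times Z2 v2) (sexp_times W2 u2))"
  have "Tgen [Z1, Z2] [W1, W2] = fsum (\<lambda>ef. smult (qser
      ((\<lambda>((e1,e2),(f1,f2)). bibracket [Suc e1, Suc e2] [f1, f2]) ef)) (?M ef))"
    unfolding Tgen_length_two by (rule fsum_cong) auto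
  also have "\<dots> = fsum (\<lambda>x. if (\<lambda>(u1,u2,v1,v2). u2 < u1 \<and> 0 < u2 \<and> 0 < v1 \<and> 0 < v2) x
      then smult (qpow ((\<lambda>(u1,u2,v1,v2). u1 * v1 + u2 * v2) x)) (?E x) else 0)"
    apply (rule fsum_qser_exchange[where dg="\<lambda>((e1,e2),(f1,f2)). e1 + e2 + f1 + f2"
          and w="\<lambda>(u1,u2,v1,v2) ((e1,e2),(f1,f2)). (of_nat u1 ^ f1 / fact f1 * (of_nat v1 ^ e1 / fact e1)) *
                (of_nat u2 ^ f2 / fact f2 * (of_nat v2 ^ e2 / fact e2))"])
    subgoal by (rule ext) (simp add: bibracket_depth_two case_prod_unfold)
    subgoal using finite_depth_two_indices by (simp add: case_prod_unfold)
    subgoal for ef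
      using order_ge_smult[OF order_ge_spow_smult[OF Z1 Z2] order_ge_spow_smult[OF W1 W2]]
      by (simp add: case_prod_unfold add.assoc)
    subgoal for N by (rule finite_subset[of _ "({..N} \<times> {..N}) \<times> ({..N} \<times> {..N})"]) auto
    subgoal by (simp add: smult_sexp_times_expand2[OF Z1 Z2 W1 W2] case_prod_unfold)
    done
  also have "\<dots> = ?rhs" by (rule fsum_cong) (auto split: prod.splits)
  finally show ?thesis .
qed

lemma lambert_sexp_times_eq_Tgen:
  "positive_degree A \<Longrightarrow> positive_degree C \<Longrightarrow>
     lambert (\<lambda>w n. smult (sexp_times C w) (sexp_times A n)) = Tgen [A] [C]"
  by (simp add: Tgen_depth_one smult_comm)

lemma Tgen_depth_one_swap:
  "positive_degree Z \<Longrightarrow> positive_degree W \<Longrightarrow> Tgen [Z] [W] = Tgen [W] [Z]"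
  by (simp add: Tgen_depth_one) (subst lambert_swap, simp add: smult_comm)

section \<open>The product of two depth-one series\<close>

definition lambert_product_terms ::
    "(nat \<Rightarrow> nat \<Rightarrow> ser) \<Rightarrow> (nat \<Rightarrow> nat \<Rightarrow> ser) \<Rightarrow> (nat \<times> nat) \<times> (nat \<times> nat) \<Rightarrow> ser" where
  "lambert_product_terms X Y = (\<lambda>((u1,v1),(u2,v2)). if 0 < u1 \<and> 0 < v1 \<and> 0 < u2 \<and> 0 < v2
      then smult (qpow (u1 * v1 + u2 * v2)) (smult (X u1 v1) (Y u2 v2)) else 0)"

lemma smult_lambert_lambert: "smult (lambert X) (lambert Y) = fsum (lambert_product_terms X Y)"
proof -
  have "smult (lambert X) (lambert Y) = fsum (\<lambda>(i,j). smult (lambert_terms X i) (lambert_terms Y j))"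
    unfolding lambert_def by (rule smult_fsum_fsum[OF locally_finite_lambert_terms locally_finite_lambert_terms])
  also have "\<dots> = fsum (lambert_product_terms X Y)"
    by (rule fsum_cong)
       (auto simp: lambert_terms_def lambert_product_terms_def smult_qpow_qpow)
  finally show ?thesis .
qed

lemma pointwise_finite_lambert_product_terms: "pointwise_finite (lambert_product_terms X Y)"
proof -
  have "locally_finite (\<lambda>(i,j). smult (lambert_terms X i) (lambert_terms Y j))"
    by (rule locally_finite_product[OF locally_finite_lambert_terms locally_finite_lambert_terms])
  thus ?thesis
    by (rule locally_finite_imp_pointwise_finite[OF locally_finite_subfamily])
       (auto simp: lambert_terms_def lambert_product_terms_def smult_qpow_qpow split: if_splits)
qed

lemma fsum_lambert_product_terms_swap:
  assumes "\<And>i. Q' i \<longleftrightarrow> Q (prod.swap i)"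
  shows "fsum (\<lambda>i. if Q i then lambert_product_terms X Y i else 0)
     = fsum (\<lambda>i. if Q' i then lambert_product_terms Y X i else 0)"
  by (rule fsum_reindex[where A=UNIV and B=UNIV and h=prod.swap and k=prod.swap])
     (auto simp: assms lambert_product_terms_def smult_comm add.commute)

context
  fixes X1 X2 Y1 Y2 :: ser
  assumes X1: "positive_degree X1" and X2: "positive_degree X2"
    and Y1: "positive_degree Y1" and Y2: "positive_degree Y2"
begin

abbreviation product_terms :: "(nat \<times> nat) \<times> (nat \<times> nat) \<Rightarrow> ser" where
  "product_terms \<equiv> lambert_product_terms (\<lambda>u v. smult (sexp_times X1 v) (sexp_times Y1 u))
     (\<lambda>u v. smult (sexp_times X2 v) (sexp_times Y2 u))"

lemma smult_Tgen_Tgen: "smult (Tgen [X1] [Y1]) (Tgen [X2] [Y2]) = fsum product_terms"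
  by (simp add: Tgen_depth_one X1 X2 Y1 Y2 smult_lambert_lambert)

lemma fsum_product_terms_u_greater:
  "fsum (\<lambda>i. if (\<lambda>((u1,v1),(u2,v2)). u2 < u1) i then product_terms i else 0) = Tgen [X1, X2] [Y1, Y2]"
  unfolding Tgen_depth_two[OF X1 X2 Y1 Y2]
  by (rule fsum_reindex[where A="{((u1,v1),(u2,v2)). u2 < u1 \<and> 0 < u1 \<and> 0 < v1 \<and> 0 < u2 \<and> 0 < v2}"
        and B="{(u1,u2,v1,v2). u2 < u1 \<and> 0 < u2 \<and> 0 < v1 \<and> 0 < v2}"
        and h="\<lambda>((u1,v1),(u2,v2)). (u1,u2,v1,v2)" and k="\<lambda>(u1,u2,v1,v2). ((u1,v1),(u2,v2))"])
     (auto simp: lambert_product_terms_def)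

lemma fsum_product_terms_u_equal:
  "fsum (\<lambda>i. if (\<lambda>((u1,v1),(u2,v2)). u1 = u2) i then product_terms i else 0)
     = diagonal_sum (Y1 + Y2) X1 X2"
  unfolding diagonal_sum_def
  by (rule fsum_reindex[where A="{((u1,v1),(u2,v2)). u1 = u2 \<and> 0 < u1 \<and> 0 < v1 \<and> 0 < u2 \<and> 0 < v2}"
        and B="{(w,i,j). 0 < w \<and> 0 < i \<and> 0 < j}"
        and h="\<lambda>((u1,v1),(u2,v2)). (u1,v1,v2)" and k="\<lambda>(w,i,j). ((w,i),(w,j))"])
     (auto simp: lambert_product_terms_def smult_ac sexp_times_add Y1 Y2 distrib_left)

text \<open>For \<open>v2 < v1\<close> the substitution \<open>(a1,a2,b1,b2) = (u1 + u2, u1, v2, v1 - v2)\<close> turns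
  \<open>v1 X1 + v2 X2 + u1 Y1 + u2 Y2\<close> into \<open>b1 (X1 + X2) + b2 X1 + a1 Y2 + a2 (Y1 - Y2)\<close>.\<close>

lemma sexp_times_regroup:
  assumes "v2 \<le> v1"
  shows "smult (smult (sexp_times (X1 + X2) v2) (sexp_times Y2 (u1 + u2)))
           (smult (sexp_times X1 (v1 - v2)) (sexp_times (Y1 - Y2) u1))
       = smult (smult (sexp_times X1 v1) (sexp_times Y1 u1)) (smult (sexp_times X2 v2) (sexp_times Y2 u2))"
proof -
  have "sexp_times X1 v1 = smult (sexp_times X1 v2) (sexp_times X1 (v1 - v2))"
    using sexp_times_add_nat[OF X1, of v2 "v1 - v2"] assms by simp
  moreover have "sexp_times Y1 u1 = smult (sexp_times (Y1 - Y2) u1) (sexp_times Y2 u1)"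
    using sexp_times_add[OF positive_degree_diff[OF Y1 Y2] Y2, of u1] by simp
  ultimately show ?thesis
    by (simp add: sexp_times_add[OF X1 X2] sexp_times_add_nat[OF Y2] smult_ac)
qed

lemma fsum_product_terms_v_greater:
  "fsum (\<lambda>i. if (\<lambda>((u1,v1),(u2,v2)). v2 < v1) i then product_terms i else 0)
     = Tgen [X1 + X2, X1] [Y2, Y1 - Y2]"
  unfolding Tgen_depth_two[OF positive_degree_add[OF X1 X2] X1 Y2 positive_degree_diff[OF Y1 Y2]]
proof (rule fsum_reindex[where A="{((u1,v1),(u2,v2)). v2 < v1 \<and> 0 < u1 \<and> 0 < v1 \<and> 0 < u2 \<and> 0 < v2}"
      and B="{(a1,a2,b1,b2). a2 < a1 \<and> 0 < a2 \<and> 0 < b1 \<and> 0 < b2}"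
      and h="\<lambda>((u1,v1),(u2,v2)). (u1 + u2, u1, v2, v1 - v2)" and k="\<lambda>(a1,a2,b1,b2). ((a2, b1 + b2), (a1 - a2, b1))"])
  fix i :: "(nat \<times> nat) \<times> (nat \<times> nat)"
  assume "i \<in> {((u1,v1),(u2,v2)). v2 < v1 \<and> 0 < u1 \<and> 0 < v1 \<and> 0 < u2 \<and> 0 < v2}"
  then obtain u1 v1 u2 v2 where i: "i = ((u1,v1),(u2,v2))" "v2 < v1" "0 < u1" "0 < u2" "0 < v2"
    by auto
  have "u1 * v2 \<le> u1 * v1" using i(2) by simp
  hence "(u1 + u2) * v2 + u1 * (v1 - v2) = u1 * v1 + u2 * v2"
    by (simp add: add_mult_distrib diff_mult_distrib2)
  thus "(\<lambda>(a1,a2,b1,b2). if a2 < a1 \<and> 0 < a2 \<and> 0 < b1 \<and> 0 < b2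
      then smult (qpow (a1 * b1 + a2 * b2)) (smult (smult (sexp_times (X1 + X2) b1) (sexp_times Y2 a1))
        (smult (sexp_times X1 b2) (sexp_times (Y1 - Y2) a2))) else 0) ((\<lambda>((u1,v1),(u2,v2)). (u1 + u2, u1, v2, v1 - v2)) i)
    = (if (\<lambda>((u1,v1),(u2,v2)). v2 < v1) i then product_terms i else 0)"
    using i by (simp add: lambert_product_terms_def sexp_times_regroup)
qed (auto simp: lambert_product_terms_def split: prod.splits)

lemma fsum_product_terms_v_equal:
  "fsum (\<lambda>i. if (\<lambda>((u1,v1),(u2,v2)). v1 = v2) i then product_terms i else 0)
     = diagonal_sum (X1 + X2) Y1 Y2"
  unfolding diagonal_sum_def
  by (rule fsum_reindex[where A="{((u1,v1),(u2,v2)). v1 = v2 \<and> 0 < u1 \<and> 0 < v1 \<and> 0 < u2 \<and> 0 < v2}"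
        and B="{(w,i,j). 0 < w \<and> 0 < i \<and> 0 < j}"
        and h="\<lambda>((u1,v1),(u2,v2)). (v1,u1,u2)" and k="\<lambda>(w,i,j). ((i,w),(j,w))"])
     (auto simp: lambert_product_terms_def smult_ac sexp_times_add X1 X2 algebra_simps)

end

theorem Tgen_product_split_u:
  assumes X1: "positive_degree X1" and X2: "positive_degree X2"
    and Y1: "positive_degree Y1" and Y2: "positive_degree Y2" and "X1 \<noteq> X2"
  shows "smult (Tgen [X1] [Y1]) (Tgen [X2] [Y2]) =
           Tgen [X1, X2] [Y1, Y2] + Tgen [X2, X1] [Y2, Y1]
           + sdiv (Tgen [X1] [Y1 + Y2] - Tgen [X2] [Y1 + Y2]) (X1 - X2)
           + fsum (\<lambda>k::nat. if k = 0 then 0 else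
                sscale (bernoulli k / fact k)
                  (smult (spow (X1 - X2) (k - 1))
                     (Tgen [X1] [Y1 + Y2] + sscale ((-1) ^ (k - 1)) (Tgen [X2] [Y1 + Y2]))))"
proof -
  let ?F = "\<lambda>X1 X2 Y1 Y2. lambert_product_terms (\<lambda>u v. smult (sexp_times X1 v) (sexp_times Y1 u))
     (\<lambda>u v. smult (sexp_times X2 v) (sexp_times Y2 u))"
  have Y: "positive_degree (Y1 + Y2)" by (rule positive_degree_add[OF Y1 Y2])
  have "smult (Tgen [X1] [Y1]) (Tgen [X2] [Y2])
      = fsum (\<lambda>i. if (\<lambda>((u1,v1),(u2,v2)). u2 < u1) i then ?F X1 X2 Y1 Y2 i else 0)
      + fsum (\<lambda>i. if (\<lambda>((u1,v1),(u2,v2)). u1 < u2) i then ?F X1 X2 Y1 Y2 i else 0)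
      + fsum (\<lambda>i. if (\<lambda>((u1,v1),(u2,v2)). u1 = u2) i then ?F X1 X2 Y1 Y2 i else 0)"
    unfolding smult_Tgen_Tgen[OF X1 X2 Y1 Y2]
    by (rule fsum_split3[OF pointwise_finite_lambert_product_terms]) (auto split: prod.splits)
  also have "fsum (\<lambda>i. if (\<lambda>((u1,v1),(u2,v2)). u1 < u2) i then ?F X1 X2 Y1 Y2 i else 0)
      = fsum (\<lambda>i. if (\<lambda>((u1,v1),(u2,v2)). u2 < u1) i then ?F X2 X1 Y2 Y1 i else 0)"
    by (rule fsum_lambert_product_terms_swap) (auto split: prod.splits)
  finally show ?thesis
    unfolding fsum_product_terms_u_greater[OF X1 X2 Y1 Y2] fsum_product_terms_u_greater[OF X2 X1 Y2 Y1]
      fsum_product_terms_u_equal[OF X1 X2 Y1 Y2] diagonal_sum_eq[OF X1 X2 \<open>X1 \<noteq> X2\<close>]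
      lambert_sexp_times_eq_Tgen[OF X1 Y] lambert_sexp_times_eq_Tgen[OF X2 Y]
    by (simp only: add.assoc)
qed

theorem Tgen_product_split_v:
  assumes X1: "positive_degree X1" and X2: "positive_degree X2"
    and Y1: "positive_degree Y1" and Y2: "positive_degree Y2" and "Y1 \<noteq> Y2"
  shows "smult (Tgen [X1] [Y1]) (Tgen [X2] [Y2]) =
           Tgen [X1 + X2, X1] [Y2, Y1 - Y2] + Tgen [X1 + X2, X2] [Y1, Y2 - Y1]
           + sdiv (Tgen [X1 + X2] [Y1] - Tgen [X1 + X2] [Y2]) (Y1 - Y2)
           + fsum (\<lambda>k::nat. if k = 0 then 0 else
                sscale (bernoulli k / fact k)
                  (smult (spow (Y1 - Y2) (k - 1))
                     (Tgen [X1 + X2] [Y1] + sscale ((-1) ^ (k - 1)) (Tgen [X1 + X2] [Y2]))))"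
proof -
  let ?F = "\<lambda>X1 X2 Y1 Y2. lambert_product_terms (\<lambda>u v. smult (sexp_times X1 v) (sexp_times Y1 u))
     (\<lambda>u v. smult (sexp_times X2 v) (sexp_times Y2 u))"
  have X: "positive_degree (X1 + X2)" by (rule positive_degree_add[OF X1 X2])
  have "smult (Tgen [X1] [Y1]) (Tgen [X2] [Y2])
      = fsum (\<lambda>i. if (\<lambda>((u1,v1),(u2,v2)). v2 < v1) i then ?F X1 X2 Y1 Y2 i else 0)
      + fsum (\<lambda>i. if (\<lambda>((u1,v1),(u2,v2)). v1 < v2) i then ?F X1 X2 Y1 Y2 i else 0)
      + fsum (\<lambda>i. if (\<lambda>((u1,v1),(u2,v2)). v1 = v2) i then ?F X1 X2 Y1 Y2 i else 0)"
    unfolding smult_Tgen_Tgen[OF X1 X2 Y1 Y2]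
    by (rule fsum_split3[OF pointwise_finite_lambert_product_terms]) (auto split: prod.splits)
  also have "fsum (\<lambda>i. if (\<lambda>((u1,v1),(u2,v2)). v1 < v2) i then ?F X1 X2 Y1 Y2 i else 0)
      = fsum (\<lambda>i. if (\<lambda>((u1,v1),(u2,v2)). v2 < v1) i then ?F X2 X1 Y2 Y1 i else 0)"
    by (rule fsum_lambert_product_terms_swap) (auto split: prod.splits)
  finally show ?thesis
    unfolding fsum_product_terms_v_greater[OF X1 X2 Y1 Y2] fsum_product_terms_v_greater[OF X2 X1 Y2 Y1]
      fsum_product_terms_v_equal[OF X1 X2 Y1 Y2] diagonal_sum_eq[OF Y1 Y2 \<open>Y1 \<noteq> Y2\<close>]
      lambert_sexp_times_eq_Tgen[OF Y1 X] lambert_sexp_times_eq_Tgen[OF Y2 X]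
      Tgen_depth_one_swap[OF Y1 X] Tgen_depth_one_swap[OF Y2 X] add.commute[of X2 X1]
    by (simp only: add.assoc)
qed

lemma positive_degree_variables:
  "positive_degree sX1" "positive_degree sX2" "positive_degree sY1" "positive_degree sY2"
  unfolding positive_degree_def
  by (rule order_geI; auto simp: sX1_def sX2_def sY1_def sY2_def split: if_splits)+

lemma variables_distinct: "sX1 \<noteq> sX2" "sY1 \<noteq> sY2"
  by (metis sX1_def sX2_def prod.inject zero_neq_one one_neq_zero,
      metis sY1_def sY2_def prod.inject zero_neq_one one_neq_zero)

theorem lemma3p2:
  shows "smult (Tgen [sX1] [sY1]) (Tgen [sX2] [sY2]) =
           Tgen [sX1, sX2] [sY1, sY2] + Tgen [sX2, sX1] [sY2, sY1]
           + sdiv (Tgen [sX1] [sY1 + sY2] - Tgen [sX2] [sY1 + sY2]) (sX1 - sX2)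
           + fsum (\<lambda>k::nat. if k = 0 then 0 else
                sscale (bernoulli k / fact k)
                  (smult (spow (sX1 - sX2) (k - 1))
                     (Tgen [sX1] [sY1 + sY2] + sscale ((-1) ^ (k - 1)) (Tgen [sX2] [sY1 + sY2]))))
       \<and> smult (Tgen [sX1] [sY1]) (Tgen [sX2] [sY2]) =
           Tgen [sX1 + sX2, sX1] [sY2, sY1 - sY2] + Tgen [sX1 + sX2, sX2] [sY1, sY2 - sY1]
           + sdiv (Tgen [sX1 + sX2] [sY1] - Tgen [sX1 + sX2] [sY2]) (sY1 - sY2)
           + fsum (\<lambda>k::nat. if k = 0 then 0 else
                sscale (bernoulli k / fact k)
                  (smult (spow (sY1 - sY2) (k - 1))
                     (Tgen [sX1 + sX2] [sY1] + sscale ((-1) ^ (k - 1)) (Tgen [sX1 + sX2] [sY2]))))"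
  using Tgen_product_split_u[OF positive_degree_variables variables_distinct(1)]
    Tgen_product_split_v[OF positive_degree_variables variables_distinct(2)]
  by blast

end
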